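(* Let $\mathbb{F}$ be an algebraically closed field of characteristic $p>2$ and $I=\{0,1,\dots,p-1\}$. Define the linear maps $\Theta_W: W(1)\to W(n)$, $x_1^i\partial_1\mapsto x_1^i\partial_1$ ($n\ge 1$); $\Theta_S: W(1)\to S(n)$, $x_1^i\partial_1\mapsto D_{12}(x_1^ix_2)=x_1^i\partial_1-ix_1^{i-1}x_2\partial_2$ ($n\geq 2$); $\Theta_H: W(1)\to H(2r)$, $x_1^i\partial_1\mapsto -D_H(x_1^ix_{r+1})=x_1^i\partial_1-ix_1^{i-1}x_{r+1}\partial_{r+1}$ ($r\ge1$); $\Theta_K: W(1)\to K(2r+1)$, $x_1^i\partial_1\mapsto \frac12 D_K(x_{2r+1}^i)$ ($r\ge 1$), for all $i\in I$. Then for each $X\in\{W,S,H,K\}$, $\Theta_X$ is an injective homomorphism of restricted Lie algebras from the Witt algebra $W(1)$ into $X(n)$ (where $n=2r$ for $X=H$ and $n=2r+1$ for $X=K$).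
   Context: $\mathcal{A}(n)$ is the truncated polynomial algebra: the commutative associative $\mathbb{F}$-algebra with basis $\{x^\alpha\mid \alpha\in I^n\}$ and $x^\alpha x^\beta=x^{\alpha+\beta}$, where $x^\gamma=0$ if $\gamma\notin I^n$; $x_i=x^{\varepsilon_i}$. $W(n)$ (Jacobson–Witt algebra) is the derivation algebra of $\mathcal{A}(n)$; it is a free $\mathcal{A}(n)$-module with basis $\partial_1,\dots,\partial_n$, $\partial_i(x_j)=\delta_{ij}$; $W(1)$ is the Witt algebra. For $f\in\mathcal A(n)$, $D_{ij}(f)=\partial_j(f)\partial_i-\partial_i(f)\partial_j$. $\widetilde S(n)=\{\sum f_i\partial_i\in W(n)\mid \sum_i\partial_i(f_i)=0\}$ and the special algebra is $S(n)=[\widetilde S(n),\widetilde S(n)]$. For $1\le i\le 2r$ let $\sigma(i)=1$ if $i\le r$, $\sigma(i)=-1$ if $i>r$, and $i'=i+r$ if $i\le r$, $i'=i-r$ if $i>r$. $D_H(f)=\sum_{i=1}^{2r}\sigma(i)\partial_i(f)\partial_{i'}$ for $f\in\mathcal A(2r)$, and the Hamiltonian algebra is $H(2r)=\mathrm{span}_{\mathbb F}\{D_H(x^\alpha)\mid \alpha\in I^{2r},\ \alpha\neq 0,\ \alpha\neq(p-1,\dots,p-1)\}$. For $f\in\mathcal A(2r+1)$, $D_K(f)=\sum_{i=1}^{2r+1}f_i\partial_i$ with $f_j=x_j\partial_{2r+1}(f)+\sigma(j')\partial_{j'}(f)$ for $j\le 2r$ and $f_{2r+1}=2f-\sum_{j=1}^{2r}\sigma(j)x_jf_{j'}$;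 $\widetilde K(2r+1)=\mathrm{span}_{\mathbb F}\{D_K(x^\alpha)\mid\alpha\in I^{2r+1}\}$ and the contact algebra is $K(2r+1)=[\widetilde K(2r+1),\widetilde K(2r+1)]$. All of these are restricted Lie algebras with $p$-map given by taking the $p$-th power of derivations. *)

theory Defs
  imports "HOL-Computational_Algebra.Polynomial"
begin

text \<open>The characteristic p of the field is CHAR('a). Variables are 0-based:
  paper's x_1..x_n are x_0..x_(n-1) here. A multi-index is a function nat => nat;
  I^n is represented by idx p n (entries < p, zero beyond n).
  An element of A(n) is a coefficient function on multi-indices vanishing outside I^n.
  An element of W(n) is a function j |-> coefficient of d_j (zero for j >= n).\<close>

type_synonym 'a tpoly = "(nat \<Rightarrow> nat) \<Rightarrow> 'a"
type_synonym 'a wder = "nat \<Rightarrow> 'a tpoly"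

definition idx :: "nat \<Rightarrow> nat \<Rightarrow> (nat \<Rightarrow> nat) set" where
  "idx p n = {\<alpha>. (\<forall>i. \<alpha> i < p) \<and> (\<forall>i\<ge>n. \<alpha> i = 0)}"

definition pzero :: "'a::field tpoly" where "pzero = (\<lambda>_. 0)"

definition tpa :: "nat \<Rightarrow> 'a::field tpoly set" where
  "tpa n = {f. \<forall>\<alpha>. \<alpha> \<notin> idx CHAR('a) n \<longrightarrow> f \<alpha> = 0}"

definition xmon :: "nat \<Rightarrow> (nat \<Rightarrow> nat) \<Rightarrow> 'a::field tpoly" where
  "xmon n \<alpha> = (\<lambda>\<beta>. if \<beta> = \<alpha> \<and> \<alpha> \<in> idx CHAR('a) n then 1 else 0)"

definition eps :: "nat \<Rightarrow> nat \<Rightarrow> nat" where "eps j = (\<lambda>k. if k = j then 1 else 0)"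

definition xvar :: "nat \<Rightarrow> nat \<Rightarrow> 'a::field tpoly" where "xvar n j = xmon n (eps j)"

definition padd :: "'a::field tpoly \<Rightarrow> 'a tpoly \<Rightarrow> 'a tpoly" where
  "padd f g = (\<lambda>\<gamma>. f \<gamma> + g \<gamma>)"

definition psmul :: "'a::field \<Rightarrow> 'a tpoly \<Rightarrow> 'a tpoly" where
  "psmul c f = (\<lambda>\<gamma>. c * f \<gamma>)"

text \<open>truncated product: x^alpha x^beta = x^(alpha+beta), zero outside I^n\<close>
definition pmul :: "nat \<Rightarrow> 'a::field tpoly \<Rightarrow> 'a tpoly \<Rightarrow> 'a tpoly" where
  "pmul n f g = (\<lambda>\<gamma>. if \<gamma> \<in> idx CHAR('a) n then
     (\<Sum>\<alpha>\<in>idx CHAR('a) n. \<Sum>\<beta>\<in>idx CHAR('a) n.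
        if (\<lambda>k. \<alpha> k + \<beta> k) = \<gamma> then f \<alpha> * g \<beta> else 0) else 0)"

text \<open>partial derivative d_i on A(n): d_i(x^alpha) = alpha_i x^(alpha - eps_i)\<close>
definition pd :: "nat \<Rightarrow> nat \<Rightarrow> 'a::field tpoly \<Rightarrow> 'a tpoly" where
  "pd n i f = (\<lambda>\<beta>. if \<beta> \<in> idx CHAR('a) n \<and> \<beta>(i := Suc (\<beta> i)) \<in> idx CHAR('a) n
      then of_nat (Suc (\<beta> i)) * f (\<beta>(i := Suc (\<beta> i))) else 0)"

definition Wn :: "nat \<Rightarrow> 'a::field wder set" where
  "Wn n = {D. (\<forall>i<n. D i \<in> tpa n) \<and> (\<forall>i\<ge>n. D i = pzero)}"

definition wact :: "nat \<Rightarrow> 'a::field wder \<Rightarrow> 'a tpoly \<Rightarrow> 'a tpoly" where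
  "wact n D h = (\<lambda>\<gamma>. \<Sum>i<n. pmul n (D i) (pd n i h) \<gamma>)"

definition wadd :: "'a::field wder \<Rightarrow> 'a wder \<Rightarrow> 'a wder" where
  "wadd D E = (\<lambda>j. padd (D j) (E j))"

definition wsmul :: "'a::field \<Rightarrow> 'a wder \<Rightarrow> 'a wder" where
  "wsmul c D = (\<lambda>j. psmul c (D j))"

definition wzero :: "'a::field wder" where "wzero = (\<lambda>_. pzero)"

text \<open>commutator [D,E] = DE - ED; its d_j-coefficient is D(E_j) - E(D_j)\<close>
definition wbr :: "nat \<Rightarrow> 'a::field wder \<Rightarrow> 'a wder \<Rightarrow> 'a wder" where
  "wbr n D E = (\<lambda>j. if j < n then (\<lambda>\<gamma>. wact n D (E j) \<gamma> - wact n E (D j) \<gamma>) else pzero)"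

text \<open>p-map: the p-th power D^p of the derivation D, as an element of W(n) it is
  determined by its values D^p(x_j) on the generators\<close>
definition wpow :: "nat \<Rightarrow> 'a::field wder \<Rightarrow> 'a wder" where
  "wpow n D = (\<lambda>j. if j < n then ((wact n D) ^^ CHAR('a)) (xvar n j) else pzero)"

inductive_set lspan :: "'a::field wder set \<Rightarrow> 'a wder set" for A where
  lspan_zero: "wzero \<in> lspan A"
| lspan_step: "D \<in> A \<Longrightarrow> E \<in> lspan A \<Longrightarrow> wadd (wsmul c D) E \<in> lspan A"

definition Stilde :: "nat \<Rightarrow> 'a::field wder set" where
  "Stilde n = {D \<in> Wn n. \<forall>\<gamma>. (\<Sum>i<n. pd n i (D i) \<gamma>) = 0}"

definition Sn :: "nat \<Rightarrow> 'a::field wder set" where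
  "Sn n = lspan {wbr n D E | D E. D \<in> Stilde n \<and> E \<in> Stilde n}"

definition Dij :: "nat \<Rightarrow> nat \<Rightarrow> nat \<Rightarrow> 'a::field tpoly \<Rightarrow> 'a wder" where
  "Dij n i j f = (\<lambda>k. if k = i then pd n j f
                      else if k = j then psmul (-1) (pd n i f) else pzero)"

text \<open>sigma and i' (0-based: indices 0..2r-1)\<close>
definition sig :: "nat \<Rightarrow> nat \<Rightarrow> 'a::field" where "sig r i = (if i < r then 1 else -1)"
definition prm :: "nat \<Rightarrow> nat \<Rightarrow> nat" where "prm r i = (if i < r then i + r else i - r)"

text \<open>D_H(f) = sum_i sigma(i) d_i(f) d_(i'); its d_j-coefficient is sigma(j') d_(j')(f)\<close>
definition DH :: "nat \<Rightarrow> 'a::field tpoly \<Rightarrow> 'a wder" where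
  "DH r f = (\<lambda>j. if j < 2*r then psmul (sig r (prm r j)) (pd (2*r) (prm r j) f) else pzero)"

definition Hn :: "nat \<Rightarrow> 'a::field wder set" where
  "Hn r = lspan {DH r (xmon (2*r) \<alpha>) | \<alpha>. \<alpha> \<in> idx CHAR('a) (2*r) \<and> \<alpha> \<noteq> (\<lambda>_. 0)
                  \<and> \<alpha> \<noteq> (\<lambda>k. if k < 2*r then CHAR('a) - 1 else 0)}"

text \<open>contact algebra; the last variable x_(2r+1) of the paper is x_(2r) here\<close>
definition DKc :: "nat \<Rightarrow> 'a::field tpoly \<Rightarrow> nat \<Rightarrow> 'a tpoly" where
  "DKc r f j = padd (pmul (2*r+1) (xvar (2*r+1) j) (pd (2*r+1) (2*r) f))
                    (psmul (sig r (prm r j)) (pd (2*r+1) (prm r j) f))"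

definition DK :: "nat \<Rightarrow> 'a::field tpoly \<Rightarrow> 'a wder" where
  "DK r f = (\<lambda>j. if j < 2*r then DKc r f j
     else if j = 2*r then (\<lambda>\<gamma>. 2 * f \<gamma>
        - (\<Sum>i<2*r. sig r i * pmul (2*r+1) (xvar (2*r+1) i) (DKc r f (prm r i)) \<gamma>))
     else pzero)"

definition Ktilde :: "nat \<Rightarrow> 'a::field wder set" where
  "Ktilde r = lspan {DK r (xmon (2*r+1) \<alpha>) | \<alpha>. \<alpha> \<in> idx CHAR('a) (2*r+1)}"

definition Kn :: "nat \<Rightarrow> 'a::field wder set" where
  "Kn r = lspan {wbr (2*r+1) D E | D E. D \<in> Ktilde r \<and> E \<in> Ktilde r}"

definition imgW :: "nat \<Rightarrow> nat \<Rightarrow> 'a::field wder" where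
  "imgW n i = (\<lambda>j. if j = 0 then xmon n (\<lambda>k. if k = 0 then i else 0) else pzero)"

definition imgS :: "nat \<Rightarrow> nat \<Rightarrow> 'a::field wder" where
  "imgS n i = Dij n 0 1 (xmon n (\<lambda>k. if k = 0 then i else if k = 1 then 1 else 0))"

definition imgH :: "nat \<Rightarrow> nat \<Rightarrow> 'a::field wder" where
  "imgH r i = wsmul (-1) (DH r (xmon (2*r) (\<lambda>k. if k = 0 then i else if k = r then 1 else 0)))"

definition imgK :: "nat \<Rightarrow> nat \<Rightarrow> 'a::field wder" where
  "imgK r i = wsmul (1/2) (DK r (xmon (2*r+1) (\<lambda>k. if k = 2*r then i else 0)))"

definition theta :: "(nat \<Rightarrow> 'a::field wder) \<Rightarrow> 'a wder \<Rightarrow> 'a wder" where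
  "theta img D = (\<lambda>j \<gamma>. \<Sum>i<CHAR('a). D 0 (\<lambda>k. if k = 0 then i else 0) * img i j \<gamma>)"

definition inj_rhom :: "nat \<Rightarrow> 'a::field wder set \<Rightarrow> ('a wder \<Rightarrow> 'a wder) \<Rightarrow> bool" where
  "inj_rhom n L \<Theta> \<longleftrightarrow>
     (\<forall>D\<in>Wn 1. \<Theta> D \<in> L)
   \<and> (\<forall>D\<in>Wn 1. \<forall>E\<in>Wn 1. \<Theta> (wadd D E) = wadd (\<Theta> D) (\<Theta> E))
   \<and> (\<forall>c. \<forall>D\<in>Wn 1. \<Theta> (wsmul c D) = wsmul c (\<Theta> D))
   \<and> (\<forall>D\<in>Wn 1. \<forall>E\<in>Wn 1. \<Theta> (wbr 1 D E) = wbr n (\<Theta> D) (\<Theta> E))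
   \<and> (\<forall>D\<in>Wn 1. \<Theta> (wpow 1 D) = wpow n (\<Theta> D))
   \<and> inj_on \<Theta> (Wn 1)"

end

theory Submission
  imports Defs "HOL-Computational_Algebra.Primes"
begin

text \<open>All four maps are instances of one construction: for a variable \<open>x\<^sub>k\<close>, a set \<open>J\<close> of
  other variables and a scalar \<open>\<lambda>\<close>, send \<open>f(x\<^sub>1)\<partial>\<^sub>1\<close> to
  \<open>f(x\<^sub>k)\<partial>\<^sub>k + \<lambda> f'(x\<^sub>k) \<Sum>\<^sub>j\<^sub>\<in>\<^sub>J x\<^sub>j\<partial>\<^sub>j\<close>
  (\<open>\<Theta>\<^sub>W\<close>: \<open>J = {}\<close>; \<open>\<Theta>\<^sub>S\<close>, \<open>\<Theta>\<^sub>H\<close>: \<open>J = {x\<^sub>2}\<close> resp. \<open>{x\<^sub>r\<^sub>+\<^sub>1}\<close>, \<open>\<lambda> = -1\<close>;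
  \<open>\<Theta>\<^sub>K\<close>: \<open>k = 2r+1\<close>, \<open>J\<close> all other variables, \<open>\<lambda> = 1/2\<close>).
  On functions \<open>h(x\<^sub>k)\<close> and \<open>x\<^sub>j h(x\<^sub>k)\<close> the lift of \<open>f\<partial>\<close> acts through the one-variable
  operators \<open>h \<mapsto> f h'\<close> and \<open>h \<mapsto> f h' + \<lambda> f' h\<close>, which makes the lift a Lie homomorphism and
  injective. For the \<open>p\<close>-map one needs \<open>(f\<partial> + \<lambda> f')\<^sup>p 1 = \<lambda> ((f\<partial>)\<^sup>p x)'\<close>: by the Leibniz
  rule and \<open>p | (p choose i)\<close> the left side is additive in \<open>\<lambda>\<close>, so for \<open>\<lambda>\<close> in the prime
  field it reduces to \<open>\<lambda> = 1\<close>, where \<open>f\<partial> + f' = \<partial> \<circ> f\<close>.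
  Finally, the image lies in the derived algebras because \<open>[x\<partial>, x\<^sup>i\<partial>] = (i - 1) x\<^sup>i\<partial>\<close> and
  \<open>[\<partial>, x\<^sup>2\<partial>] = 2x\<partial>\<close>, with \<open>2 \<noteq> 0\<close> as \<open>p > 2\<close>.\<close>

declare One_nat_def [simp del]

section \<open>Truncated polynomials\<close>

lemma finite_idx: "finite (idx p n)"
proof -
  have "idx p n \<subseteq> {f. \<forall>x. (x \<in> {..<n} \<longrightarrow> f x \<in> {..<p}) \<and> (x \<notin> {..<n} \<longrightarrow> f x = 0)}"
    by (auto simp: idx_def)
  moreover have "finite {f. \<forall>x. (x \<in> {..<n} \<longrightarrow> f x \<in> {..<p}) \<and> (x \<notin> {..<n} \<longrightarrow> f x = (0::nat))}"
    by (rule finite_set_of_finite_funs) auto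
  ultimately show ?thesis by (rule finite_subset)
qed

lemma idx_downward_closed: "\<gamma> \<in> idx p n \<Longrightarrow> \<forall>l. \<alpha> l \<le> \<gamma> l \<Longrightarrow> \<alpha> \<in> idx p n"
  unfolding idx_def by (auto intro: le_less_trans) (metis le_zero_eq)

lemma diff_in_idx: "\<gamma> \<in> idx p n \<Longrightarrow> (\<lambda>l. \<gamma> l - \<alpha> l) \<in> idx p n"
  by (rule idx_downward_closed) auto

lemma fun_upd_in_idx: "\<beta> \<in> idx p n \<Longrightarrow> k < n \<Longrightarrow> \<beta>(k := x) \<in> idx p n \<longleftrightarrow> x < p"
  unfolding idx_def by auto

lemma add_fun_eq_iff:
  fixes \<alpha> \<beta> \<gamma> :: "nat \<Rightarrow> nat"
  shows "(\<lambda>k. \<alpha> k + \<beta> k) = \<gamma> \<longleftrightarrow> (\<forall>l. \<alpha> l \<le> \<gamma> l) \<and> \<beta> = (\<lambda>l. \<gamma> l - \<alpha> l)"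
  by (auto simp: fun_eq_iff) (metis le_add1, metis add_diff_cancel_left')

lemma pmul_outside_idx: "\<gamma> \<notin> idx CHAR('a) n \<Longrightarrow> pmul n (f::'a::field tpoly) g \<gamma> = 0"
  by (simp add: pmul_def)

lemma pmul_in_tpa: "pmul n (f::'a::field tpoly) g \<in> tpa n"
  by (simp add: tpa_def pmul_def)

lemma pmul_commute: "pmul n (f::'a::field tpoly) g = pmul n g f"
proof (rule ext)
  fix \<gamma>
  show "pmul n f g \<gamma> = pmul n g f \<gamma>"
    unfolding pmul_def by (subst sum.swap) (auto intro!: sum.cong simp: add.commute mult.commute)
qed

lemma pmul_as_convolution:
  fixes F G :: "'a::field tpoly"
  assumes \<gamma>: "\<gamma> \<in> idx CHAR('a) n"
  shows "pmul n F G \<gamma> = (\<Sum>\<alpha>\<in>idx CHAR('a) n.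
     if \<forall>l. \<alpha> l \<le> \<gamma> l then F \<alpha> * G (\<lambda>l. \<gamma> l - \<alpha> l) else 0)"
  unfolding pmul_def
proof (simp add: \<gamma>, intro sum.cong refl)
  fix \<alpha>
  have "(\<Sum>\<beta>\<in>idx CHAR('a) n. if (\<lambda>k. \<alpha> k + \<beta> k) = \<gamma> then F \<alpha> * G \<beta> else 0)
     = (\<Sum>\<beta>\<in>idx CHAR('a) n. if \<beta> = (\<lambda>l. \<gamma> l - \<alpha> l)
          then (if \<forall>l. \<alpha> l \<le> \<gamma> l then F \<alpha> * G \<beta> else 0) else 0)"
    by (intro sum.cong refl) (simp only: add_fun_eq_iff, auto)
  also have "\<dots> = (if \<forall>l. \<alpha> l \<le> \<gamma> l then F \<alpha> * G (\<lambda>l. \<gamma> l - \<alpha> l) else 0)"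
    by (simp add: sum.delta[OF finite_idx] diff_in_idx[OF \<gamma>])
  finally show "(\<Sum>\<beta>\<in>idx CHAR('a) n. if (\<lambda>k. \<alpha> k + \<beta> k) = \<gamma> then F \<alpha> * G \<beta> else 0) = \<dots>" .
qed

lemma sum_idx_middle_exponent:
  assumes "\<gamma> \<in> idx p n"
  shows "(\<Sum>\<alpha>\<in>idx p n. if (\<lambda>k. a k + b k) = \<alpha> \<and> (\<lambda>k. \<alpha> k + c k) = \<gamma> then x else 0)
       = (if (\<lambda>k. a k + b k + c k) = \<gamma> then x else 0)"
proof -
  have mem: "(\<lambda>k. a k + b k) \<in> idx p n" if "(\<lambda>k. a k + b k + c k) = \<gamma>"
    using assms that by (auto intro: idx_downward_closed)
  have "(\<Sum>\<alpha>\<in>idx p n. if (\<lambda>k. a k + b k) = \<alpha> \<and> (\<lambda>k. \<alpha> k + c k) = \<gamma> then x else 0)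
      = (\<Sum>\<alpha>\<in>idx p n. if \<alpha> = (\<lambda>k. a k + b k)
           then (if (\<lambda>k. a k + b k + c k) = \<gamma> then x else 0) else 0)"
    by (intro sum.cong refl) auto
  then show ?thesis using mem by (simp add: sum.delta[OF finite_idx])
qed

lemma pmul_pmul_eq_triple_sum:
  fixes f g h :: "'a::field tpoly"
  assumes \<gamma>: "\<gamma> \<in> idx CHAR('a) n"
  shows "pmul n (pmul n f g) h \<gamma> =
    (\<Sum>a\<in>idx CHAR('a) n. \<Sum>b\<in>idx CHAR('a) n. \<Sum>c\<in>idx CHAR('a) n.
       if (\<lambda>k. a k + b k + c k) = \<gamma> then f a * g b * h c else 0)"
proof -
  let ?I = "idx CHAR('a) n"
  let ?X = "\<lambda>\<alpha> a b c. if (\<lambda>k. a k + b k) = \<alpha> \<and> (\<lambda>k. \<alpha> k + c k) = \<gamma> then f a * g b * h c else 0"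
  have "pmul n (pmul n f g) h \<gamma> = (\<Sum>\<alpha>\<in>?I. \<Sum>c\<in>?I. if (\<lambda>k. \<alpha> k + c k) = \<gamma>
      then (\<Sum>a\<in>?I. \<Sum>b\<in>?I. if (\<lambda>k. a k + b k) = \<alpha> then f a * g b else 0) * h c else 0)"
    using \<gamma> unfolding pmul_def by (auto intro!: sum.cong)
  also have "\<dots> = (\<Sum>\<alpha>\<in>?I. \<Sum>c\<in>?I. \<Sum>a\<in>?I. \<Sum>b\<in>?I. ?X \<alpha> a b c)"
    by (intro sum.cong refl) (auto simp: sum_distrib_right intro!: sum.cong)
  also have "\<dots> = (\<Sum>a\<in>?I. \<Sum>\<alpha>\<in>?I. \<Sum>c\<in>?I. \<Sum>b\<in>?I. ?X \<alpha> a b c)"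
    by (subst sum.swap) (intro sum.cong refl sum.swap)
  also have "\<dots> = (\<Sum>a\<in>?I. \<Sum>\<alpha>\<in>?I. \<Sum>b\<in>?I. \<Sum>c\<in>?I. ?X \<alpha> a b c)"
    by (rule sum.cong[OF refl], rule sum.cong[OF refl], rule sum.swap)
  also have "\<dots> = (\<Sum>a\<in>?I. \<Sum>b\<in>?I. \<Sum>c\<in>?I. \<Sum>\<alpha>\<in>?I. ?X \<alpha> a b c)"
    by (rule sum.cong[OF refl], rule sum.swap[THEN trans], rule sum.cong[OF refl], rule sum.swap)
  also have "\<dots> = (\<Sum>a\<in>?I. \<Sum>b\<in>?I. \<Sum>c\<in>?I.
       if (\<lambda>k. a k + b k + c k) = \<gamma> then f a * g b * h c else 0)"
    by (intro sum.cong refl sum_idx_middle_exponent[OF \<gamma>])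
  finally show ?thesis .
qed

lemma pmul_assoc:
  fixes f g h :: "'a::field tpoly"
  shows "pmul n (pmul n f g) h = pmul n f (pmul n g h)"
proof (rule ext)
  fix \<gamma>
  let ?I = "idx CHAR('a) n"
  show "pmul n (pmul n f g) h \<gamma> = pmul n f (pmul n g h) \<gamma>"
  proof (cases "\<gamma> \<in> ?I")
    case False
    then show ?thesis by (simp add: pmul_outside_idx)
  next
    case True
    have "pmul n f (pmul n g h) \<gamma> = pmul n (pmul n g h) f \<gamma>"
      by (simp add: pmul_commute)
    also have "\<dots> = (\<Sum>b\<in>?I. \<Sum>c\<in>?I. \<Sum>a\<in>?I.
       if (\<lambda>k. b k + c k + a k) = \<gamma> then g b * h c * f a else 0)"
      by (rule pmul_pmul_eq_triple_sum[OF True])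
    also have "\<dots> = (\<Sum>b\<in>?I. \<Sum>a\<in>?I. \<Sum>c\<in>?I.
       if (\<lambda>k. a k + b k + c k) = \<gamma> then f a * g b * h c else 0)"
      by (rule sum.cong[OF refl], rule sum.swap[THEN trans], intro sum.cong refl) (simp add: ac_simps)
    also have "\<dots> = (\<Sum>a\<in>?I. \<Sum>b\<in>?I. \<Sum>c\<in>?I.
       if (\<lambda>k. a k + b k + c k) = \<gamma> then f a * g b * h c else 0)"
      by (rule sum.swap)
    also have "\<dots> = pmul n (pmul n f g) h \<gamma>"
      by (rule pmul_pmul_eq_triple_sum[OF True, symmetric])
    finally show ?thesis ..
  qed
qed

lemma pmul_bilinear:
  "pmul n (f::'a::field tpoly) g \<gamma> = (\<Sum>\<alpha>\<in>idx CHAR('a) n. \<Sum>\<beta>\<in>idx CHAR('a) n.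
     (if \<gamma> \<in> idx CHAR('a) n \<and> (\<lambda>k. \<alpha> k + \<beta> k) = \<gamma> then 1 else 0) * (f \<alpha> * g \<beta>))"
  unfolding pmul_def by (cases "\<gamma> \<in> idx CHAR('a) n") (simp_all, (intro sum.cong refl, simp)+)

lemma pmul_add_left:
  "pmul n (\<lambda>\<gamma>. F \<gamma> + G \<gamma>) (H::'a::field tpoly) = (\<lambda>\<gamma>. pmul n F H \<gamma> + pmul n G H \<gamma>)"
  by (rule ext) (simp only: pmul_bilinear distrib_left distrib_right sum.distrib)

lemma pmul_smul_left: "pmul n (\<lambda>\<gamma>. c * F \<gamma>) (H::'a::field tpoly) = (\<lambda>\<gamma>. c * pmul n F H \<gamma>)"
  by (rule ext) (simp add: pmul_bilinear sum_distrib_left ac_simps)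

lemma pmul_zero_left: "pmul n (\<lambda>\<gamma>. 0) (H::'a::field tpoly) = (\<lambda>\<gamma>. 0)"
  by (rule ext) (auto simp: pmul_def intro!: sum.neutral)

lemma pmul_sum_left:
  "pmul n (\<lambda>\<gamma>. \<Sum>i\<in>A. F i \<gamma>) (H::'a::field tpoly) = (\<lambda>\<gamma>. \<Sum>i\<in>A. pmul n (F i) H \<gamma>)"
proof (cases "finite A")
  case True
  then show ?thesis
    by (induction A rule: finite_induct) (simp_all add: pmul_zero_left pmul_add_left)
qed (simp add: pmul_zero_left)

lemma pmul_add_right:
  "pmul n (H::'a::field tpoly) (\<lambda>\<gamma>. F \<gamma> + G \<gamma>) = (\<lambda>\<gamma>. pmul n H F \<gamma> + pmul n H G \<gamma>)"
  by (subst (1 2 3) pmul_commute) (rule pmul_add_left)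

lemma pmul_smul_right: "pmul n (H::'a::field tpoly) (\<lambda>\<gamma>. c * F \<gamma>) = (\<lambda>\<gamma>. c * pmul n H F \<gamma>)"
  by (subst (1 2) pmul_commute) (rule pmul_smul_left)

lemma pmul_zero_right: "pmul n (H::'a::field tpoly) (\<lambda>\<gamma>. 0) = (\<lambda>\<gamma>. 0)"
  by (subst pmul_commute) (rule pmul_zero_left)

lemma pmul_sum_right:
  "pmul n (H::'a::field tpoly) (\<lambda>\<gamma>. \<Sum>i\<in>A. F i \<gamma>) = (\<lambda>\<gamma>. \<Sum>i\<in>A. pmul n H (F i) \<gamma>)"
  by (subst pmul_commute) (simp add: pmul_sum_left pmul_commute)

lemma pmul_left_commute: "pmul n X (pmul n Y Z) = pmul n Y (pmul n X (Z::'a::field tpoly))"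
  by (metis pmul_assoc pmul_commute)

lemma pd_as_product: "pd n i (F::'a::field tpoly) \<beta> =
  (if \<beta> \<in> idx CHAR('a) n \<and> \<beta>(i := Suc (\<beta> i)) \<in> idx CHAR('a) n then of_nat (Suc (\<beta> i)) else 0)
  * F (\<beta>(i := Suc (\<beta> i)))"
  unfolding pd_def by simp

lemma pd_add: "pd n i (\<lambda>\<gamma>. F \<gamma> + G \<gamma>) = (\<lambda>\<gamma>. pd n i F \<gamma> + pd n i (G::'a::field tpoly) \<gamma>)"
  by (rule ext) (simp only: pd_as_product distrib_left)

lemma pd_diff: "pd n i (\<lambda>\<gamma>. F \<gamma> - G \<gamma>) = (\<lambda>\<gamma>. pd n i F \<gamma> - pd n i (G::'a::field tpoly) \<gamma>)"
  by (rule ext) (simp only: pd_as_product right_diff_distrib)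

lemma pd_smul: "pd n i (\<lambda>\<gamma>. c * F \<gamma>) = (\<lambda>\<gamma>. c * pd n i (F::'a::field tpoly) \<gamma>)"
  by (rule ext) (simp only: pd_as_product ac_simps)

lemma pd_uminus: "pd n i (\<lambda>\<gamma>. - F \<gamma>) = (\<lambda>\<gamma>. - pd n i (F::'a::field tpoly) \<gamma>)"
  by (rule ext) (simp add: pd_as_product)

lemma pd_zero: "pd n i (\<lambda>\<gamma>. 0::'a::field) = (\<lambda>\<gamma>. 0)"
  by (auto simp: pd_def fun_eq_iff)

lemma pd_sum: "pd n i (\<lambda>\<gamma>. \<Sum>j\<in>A. F j \<gamma>) = (\<lambda>\<gamma>. \<Sum>j\<in>A. pd n i (F j::'a::field tpoly) \<gamma>)"
proof (cases "finite A")
  case True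
  then show ?thesis by (induction A rule: finite_induct) (simp_all add: pd_zero pd_add)
qed (simp add: pd_zero)

lemma pd_in_tpa: "pd n i (f::'a::field tpoly) \<in> tpa n"
  by (simp add: tpa_def pd_def)


section \<open>Polynomials in one variable\<close>

definition mono1 :: "nat \<Rightarrow> nat \<Rightarrow> nat" where "mono1 a = (\<lambda>l. if l = 0 then a else 0)"

abbreviation xpow1 :: "nat \<Rightarrow> 'a::field tpoly" where "xpow1 a \<equiv> xmon 1 (mono1 a)"

lemma mono1_0 [simp]: "mono1 a 0 = a"
  by (simp add: mono1_def)

lemma mono1_inj [simp]: "mono1 a = mono1 b \<longleftrightarrow> a = b"
  by (auto simp: mono1_def fun_eq_iff)

lemma mono1_in_idx [simp]: "mono1 a \<in> idx p 1 \<longleftrightarrow> a < p"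
  by (auto simp: mono1_def idx_def)

lemma mono1_upd [simp]: "(mono1 a)(0 := b) = mono1 b"
  by (auto simp: mono1_def)

lemma mono1_add [simp]: "(\<lambda>k. mono1 a k + mono1 b k) = mono1 (a + b)"
  by (auto simp: mono1_def)

lemma idx1_eq_mono1: "\<alpha> \<in> idx p 1 \<Longrightarrow> \<alpha> = mono1 (\<alpha> 0)"
  by (auto simp: mono1_def idx_def fun_eq_iff)

lemma sum_idx1: "(\<Sum>\<alpha>\<in>idx p 1. F \<alpha>) = (\<Sum>a<p. F (mono1 a))"
proof -
  have "idx p 1 = mono1 ` {..<p}"
  proof (intro set_eqI iffI)
    fix \<alpha>
    assume \<alpha>: "\<alpha> \<in> idx p 1"
    then have "\<alpha> 0 < p" by (simp add: idx_def)
    then show "\<alpha> \<in> mono1 ` {..<p}"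
      using idx1_eq_mono1[OF \<alpha>] by blast
  qed auto
  then show ?thesis by (simp add: sum.reindex inj_on_def)
qed

lemma tpa1_eqI:
  fixes f g :: "'a::field tpoly"
  assumes "f \<in> tpa 1" "g \<in> tpa 1" "\<And>c. c < CHAR('a) \<Longrightarrow> f (mono1 c) = g (mono1 c)"
  shows "f = g"
proof
  fix \<alpha>
  show "f \<alpha> = g \<alpha>"
  proof (cases "\<alpha> \<in> idx CHAR('a) 1")
    case True
    then have "\<alpha> 0 < CHAR('a)" by (simp add: idx_def)
    then show ?thesis using assms(3)[of "\<alpha> 0"] idx1_eq_mono1[OF True] by simp
  next
    case False
    then show ?thesis using assms(1,2) by (simp add: tpa_def)
  qed
qed

lemma tpa1_outside: "f \<in> tpa 1 \<Longrightarrow> \<not> c < CHAR('a) \<Longrightarrow> (f::'a::field tpoly) (mono1 c) = 0"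
  by (simp add: tpa_def)

lemma pd1_mono1:
  fixes f :: "'a::field tpoly"
  assumes "c < CHAR('a)"
  shows "pd 1 0 f (mono1 c) = (if c + 1 < CHAR('a) then of_nat (c + 1) * f (mono1 (c + 1)) else 0)"
  using assms by (simp add: pd_def Suc_eq_plus1)

lemma pd1_mono1_tpa:
  fixes f :: "'a::field tpoly"
  assumes "c < CHAR('a)" "f \<in> tpa 1"
  shows "pd 1 0 f (mono1 c) = of_nat (c + 1) * f (mono1 (c + 1))"
  using assms by (auto simp add: pd1_mono1 tpa1_outside)

lemma pmul1_mono1:
  fixes f g :: "'a::field tpoly"
  assumes c: "c < CHAR('a)"
  shows "pmul 1 f g (mono1 c) = (\<Sum>a\<le>c. f (mono1 a) * g (mono1 (c - a)))"
proof -
  let ?p = "CHAR('a)"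
  have "pmul 1 f g (mono1 c) = (\<Sum>a<?p. \<Sum>b<?p. if a + b = c then f (mono1 a) * g (mono1 b) else 0)"
    using c unfolding pmul_def by (simp only: sum_idx1 mono1_add mono1_inj mono1_in_idx if_True)
  also have "\<dots> = (\<Sum>a<?p. if a \<le> c then f (mono1 a) * g (mono1 (c - a)) else 0)"
  proof (rule sum.cong[OF refl])
    fix a
    have "(\<Sum>b<?p. if a + b = c then f (mono1 a) * g (mono1 b) else 0)
        = (\<Sum>b<?p. if b = c - a then (if a \<le> c then f (mono1 a) * g (mono1 b) else 0) else 0)"
      by (rule sum.cong) auto
    also have "\<dots> = (if a \<le> c then f (mono1 a) * g (mono1 (c - a)) else 0)"
      using c by (subst sum.delta) auto
    finally show "(\<Sum>b<?p. if a + b = c then f (mono1 a) * g (mono1 b) else 0) = \<dots>" .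
  qed
  also have "\<dots> = (\<Sum>a\<in>{..<?p} \<inter> {a. a \<le> c}. f (mono1 a) * g (mono1 (c - a)))"
    by (simp add: sum.inter_restrict)
  also have "{..<?p} \<inter> {a. a \<le> c} = {..c}"
    using c by auto
  finally show ?thesis .
qed

lemma xpow1_mono1: "xpow1 a (mono1 c) = (if c = a \<and> a < CHAR('a) then 1 else (0::'a::field))"
  by (auto simp: xmon_def)

lemma xpow1_in_tpa: "xpow1 a \<in> tpa 1"
  by (simp add: tpa_def xmon_def)

lemma xvar1_eq_xpow1: "xvar 1 0 = xpow1 1"
  by (simp add: xvar_def eps_def mono1_def)

lemma pmul_xpow1:
  assumes "0 < CHAR('a)"
  shows "pmul 1 (xpow1 a) (xpow1 b) = (xpow1 (a + b) :: 'a::field tpoly)"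
proof (rule tpa1_eqI[OF pmul_in_tpa xpow1_in_tpa])
  fix c
  assume c: "c < CHAR('a)"
  have "(pmul 1 (xpow1 a) (xpow1 b) (mono1 c) :: 'a)
      = (\<Sum>i\<le>c. (if i = a \<and> a < CHAR('a) then 1 else 0) * (if c - i = b \<and> b < CHAR('a) then 1 else 0))"
    using c by (simp add: pmul1_mono1 xpow1_mono1)
  also have "\<dots> = (\<Sum>i\<le>c. if i = a then (if c - a = b \<and> a < CHAR('a) \<and> b < CHAR('a) then 1 else 0) else 0)"
    by (rule sum.cong) auto
  also have "\<dots> = xpow1 (a + b) (mono1 c)"
    using c by (auto simp: xpow1_mono1)
  finally show "(pmul 1 (xpow1 a) (xpow1 b) (mono1 c) :: 'a) = xpow1 (a + b) (mono1 c)" .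
qed

lemma pmul_xpow1_0_left:
  fixes h :: "'a::field tpoly"
  assumes "h \<in> tpa 1" "0 < CHAR('a)"
  shows "pmul 1 (xpow1 0) h = h"
proof (rule tpa1_eqI[OF pmul_in_tpa assms(1)])
  fix c
  assume "c < CHAR('a)"
  then have "pmul 1 (xpow1 0) h (mono1 c) = (\<Sum>a\<le>c. (if a = 0 then 1 else 0) * h (mono1 (c - a)))"
    using assms(2) by (simp add: pmul1_mono1 xpow1_mono1)
  also have "\<dots> = h (mono1 c)"
    by (simp add: sum.atMost_shift)
  finally show "pmul 1 (xpow1 0) h (mono1 c) = h (mono1 c)" .
qed

lemma pmul_xpow1_0_right: "h \<in> tpa 1 \<Longrightarrow> 0 < CHAR('a) \<Longrightarrow> pmul 1 h (xpow1 0) = (h::'a::field tpoly)"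
  by (subst pmul_commute) (rule pmul_xpow1_0_left)

lemma pd_xpow1_Suc: "pd 1 0 (xpow1 (Suc b)) = (\<lambda>\<gamma>. of_nat (Suc b) * (xpow1 b \<gamma> :: 'a::field))"
proof (rule tpa1_eqI[OF pd_in_tpa])
  show "(\<lambda>\<gamma>. of_nat (Suc b) * (xpow1 b \<gamma> :: 'a)) \<in> tpa 1"
    by (simp add: tpa_def xmon_def)
  fix c
  assume c: "c < CHAR('a)"
  show "pd 1 0 (xpow1 (Suc b)) (mono1 c) = of_nat (Suc b) * (xpow1 b (mono1 c) :: 'a)"
  proof (cases "Suc b = CHAR('a) \<and> c = b")
    case True
    have "pd 1 0 (xpow1 (Suc b)) (mono1 c) = of_nat (c + 1) * (xpow1 (Suc b) (mono1 (c + 1)) :: 'a)"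
      by (rule pd1_mono1_tpa[OF c xpow1_in_tpa])
    then show ?thesis
      using True by (simp add: xpow1_mono1)
  next
    case False
    then show ?thesis
      using c by (auto simp: pd1_mono1_tpa[OF c xpow1_in_tpa] xpow1_mono1)
  qed
qed

lemma pd_xpow1_0: "0 < CHAR('a) \<Longrightarrow> pd 1 0 (xpow1 0) = (\<lambda>_. 0::'a::field)"
proof (rule tpa1_eqI[OF pd_in_tpa])
  fix c
  assume "c < CHAR('a)"
  then show "pd 1 0 (xpow1 0) (mono1 c) = (0::'a)"
    by (simp add: pd1_mono1_tpa xpow1_in_tpa xpow1_mono1)
qed (simp add: tpa_def)

lemma pd_xvar1: "1 < CHAR('a) \<Longrightarrow> pd 1 0 (xvar 1 0::'a::field tpoly) = xpow1 0"
  by (simp add: xvar1_eq_xpow1 pd_xpow1_Suc[of 0, simplified One_nat_def[symmetric]])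

lemma leibniz_coeff_identity:
  fixes F G :: "nat \<Rightarrow> 'a::comm_ring_1"
  shows "(\<Sum>a\<le>c. of_nat (a + 1) * F (a + 1) * G (c - a))
       + (\<Sum>a\<le>c. F a * (of_nat (c - a + 1) * G (c - a + 1)))
       = of_nat (c + 1) * (\<Sum>a\<le>c + 1. F a * G (c + 1 - a))"
proof -
  have 1: "(\<Sum>a\<le>c + 1. of_nat a * F a * G (c + 1 - a))
      = (\<Sum>a\<le>c. of_nat (a + 1) * F (a + 1) * G (c - a))"
    unfolding Suc_eq_plus1[symmetric] by (subst sum.atMost_Suc_shift) (simp del: sum.atMost_Suc)
  have 2: "(\<Sum>a\<le>c + 1. of_nat (c + 1 - a) * F a * G (c + 1 - a))
      = (\<Sum>a\<le>c. F a * (of_nat (c - a + 1) * G (c - a + 1)))"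
    unfolding Suc_eq_plus1[symmetric]
    by (subst sum.atMost_Suc) (simp add: Suc_diff_le mult.commute mult.left_commute del: sum.atMost_Suc)
  have "(\<Sum>a\<le>c + 1. of_nat a * F a * G (c + 1 - a)) + (\<Sum>a\<le>c + 1. of_nat (c + 1 - a) * F a * G (c + 1 - a))
      = (\<Sum>a\<le>c + 1. (of_nat a + of_nat (c + 1 - a)) * F a * G (c + 1 - a))"
    by (simp only: sum.distrib[symmetric] distrib_right)
  also have "\<dots> = (\<Sum>a\<le>c + 1. of_nat (c + 1) * (F a * G (c + 1 - a)))"
    by (intro sum.cong refl) (simp flip: of_nat_add add: mult.assoc)
  also have "\<dots> = of_nat (c + 1) * (\<Sum>a\<le>c + 1. F a * G (c + 1 - a))"
    by (simp only: sum_distrib_left)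
  finally show ?thesis using 1 2 by simp
qed

lemma pd1_pmul_mono1:
  fixes f g :: "'a::field tpoly"
  assumes c: "c < CHAR('a)"
  shows "pd 1 0 (pmul 1 f g) (mono1 c) = of_nat (c + 1) * (\<Sum>a\<le>c + 1. f (mono1 a) * g (mono1 (c + 1 - a)))"
proof (cases "c + 1 < CHAR('a)")
  case True
  then show ?thesis
    using pd1_mono1_tpa[OF c pmul_in_tpa] pmul1_mono1[OF True] by simp
next
  case False
  then have "c + 1 = CHAR('a)"
    using c by simp
  then have "of_nat (c + 1) = (0::'a)"
    by simp
  then show ?thesis
    using pd1_mono1_tpa[OF c pmul_in_tpa] False by (simp add: pmul_outside_idx)
qed

lemma pd1_pmul:
  fixes f g :: "'a::field tpoly"
  assumes f: "f \<in> tpa 1" and g: "g \<in> tpa 1"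
  shows "pd 1 0 (pmul 1 f g) = (\<lambda>\<gamma>. pmul 1 (pd 1 0 f) g \<gamma> + pmul 1 f (pd 1 0 g) \<gamma>)"
proof (rule tpa1_eqI)
  show "pd 1 0 (pmul 1 f g) \<in> tpa 1"
    by (rule pd_in_tpa)
  show "(\<lambda>\<gamma>. pmul 1 (pd 1 0 f) g \<gamma> + pmul 1 f (pd 1 0 g) \<gamma>) \<in> tpa 1"
    by (simp add: tpa_def pmul_outside_idx)
  fix c
  assume c: "c < CHAR('a)"
  let ?F = "\<lambda>a. f (mono1 a)" and ?G = "\<lambda>a. g (mono1 a)"
  have R: "pmul 1 (pd 1 0 f) g (mono1 c) + pmul 1 f (pd 1 0 g) (mono1 c)
     = (\<Sum>a\<le>c. of_nat (a + 1) * ?F (a + 1) * ?G (c - a))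
     + (\<Sum>a\<le>c. ?F a * (of_nat (c - a + 1) * ?G (c - a + 1)))"
    unfolding pmul1_mono1[OF c]
  proof (intro arg_cong2[where f="(+)"] sum.cong refl)
    fix a
    assume "a \<in> {..c}"
    then have "a < CHAR('a)" "c - a < CHAR('a)"
      using c by auto
    then show "pd 1 0 f (mono1 a) * g (mono1 (c - a)) = of_nat (a + 1) * ?F (a + 1) * ?G (c - a)"
      and "f (mono1 a) * pd 1 0 g (mono1 (c - a)) = ?F a * (of_nat (c - a + 1) * ?G (c - a + 1))"
      by (simp_all add: pd1_mono1_tpa f g)
  qed
  show "pd 1 0 (pmul 1 f g) (mono1 c) = pmul 1 (pd 1 0 f) g (mono1 c) + pmul 1 f (pd 1 0 g) (mono1 c)"
    unfolding pd1_pmul_mono1[OF c] R leibniz_coeff_identity[of ?F ?G c] ..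
qed

section \<open>Functions of one variable inside \<open>A(n)\<close>\<close>

definition emb_shape :: "nat \<Rightarrow> nat \<Rightarrow> nat \<Rightarrow> (nat \<Rightarrow> nat) \<Rightarrow> bool" where
  "emb_shape k j m \<gamma> \<longleftrightarrow> (\<forall>l. l \<noteq> k \<longrightarrow> \<gamma> l = (if l = j then m else 0))"

text \<open>\<open>emb n k j m h\<close> is \<open>h(x\<^sub>k) x\<^sub>j\<^sup>m\<close>.\<close>

definition emb :: "nat \<Rightarrow> nat \<Rightarrow> nat \<Rightarrow> nat \<Rightarrow> 'a::field tpoly \<Rightarrow> 'a tpoly" where
  "emb n k j m h = (\<lambda>\<gamma>. if \<gamma> \<in> idx CHAR('a) n \<and> emb_shape k j m \<gamma> then h (mono1 (\<gamma> k)) else 0)"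

lemma emb_in_tpa: "emb n k j m h \<in> tpa n"
  by (simp add: emb_def tpa_def)

lemma emb_as_product: "emb n k j m (h::'a::field tpoly) \<gamma> =
   (if \<gamma> \<in> idx CHAR('a) n \<and> emb_shape k j m \<gamma> then 1 else 0) * h (mono1 (\<gamma> k))"
  by (simp add: emb_def)

lemma emb_add: "emb n k j m (\<lambda>\<gamma>. F \<gamma> + G \<gamma>) = (\<lambda>\<gamma>. emb n k j m F \<gamma> + emb n k j m (G::'a::field tpoly) \<gamma>)"
  by (rule ext) (simp only: emb_as_product distrib_left)

lemma emb_diff: "emb n k j m (\<lambda>\<gamma>. F \<gamma> - G \<gamma>) = (\<lambda>\<gamma>. emb n k j m F \<gamma> - emb n k j m (G::'a::field tpoly) \<gamma>)"
  by (rule ext) (simp only: emb_as_product right_diff_distrib)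

lemma emb_smul: "emb n k j m (\<lambda>\<gamma>. c * F \<gamma>) = (\<lambda>\<gamma>. c * emb n k j m (F::'a::field tpoly) \<gamma>)"
  by (rule ext) (simp only: emb_as_product ac_simps)

lemma emb_zero: "emb n k j m (\<lambda>\<gamma>. 0::'a::field) = (\<lambda>\<gamma>. 0)"
  by (rule ext) (simp add: emb_def)

lemma emb_exponent_0: "j \<noteq> k \<Longrightarrow> emb n k j 0 h = emb n k k 0 h"
  by (simp add: emb_def emb_shape_def)

lemma sum_reindex_support:
  assumes "finite I" "inj_on e B" "e ` B \<subseteq> I" "\<And>x. x \<in> I \<Longrightarrow> x \<notin> e ` B \<Longrightarrow> X x = 0"
  shows "sum X I = sum (X \<circ> e) B"
proof -
  have "sum X I = sum X (e ` B)"
    by (rule sum.mono_neutral_right) (use assms in auto)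
  also have "\<dots> = sum (X \<circ> e) B"
    by (rule sum.reindex[OF assms(2)])
  finally show ?thesis .
qed

lemma pmul_emb_off_shape:
  fixes f g :: "'a::field tpoly"
  assumes \<gamma>: "\<gamma> \<in> idx CHAR('a) n" and off: "\<not> emb_shape k j (m + m') \<gamma>"
  shows "pmul n (emb n k j m f) (emb n k j m' g) \<gamma> = 0"
  unfolding pmul_as_convolution[OF \<gamma>]
proof (intro sum.neutral ballI)
  fix \<alpha>
  have "emb_shape k j (m + m') \<gamma>"
    if le: "\<forall>l. \<alpha> l \<le> \<gamma> l" and s1: "emb_shape k j m \<alpha>" and s2: "emb_shape k j m' (\<lambda>l. \<gamma> l - \<alpha> l)"
    unfolding emb_shape_def
  proof (intro allI impI)
    fix l
    assume "l \<noteq> k"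
    then have "\<alpha> l = (if l = j then m else 0)" "\<gamma> l - \<alpha> l = (if l = j then m' else 0)"
      using s1 s2 unfolding emb_shape_def by auto
    then show "\<gamma> l = (if l = j then m + m' else 0)"
      using le[rule_format, of l] by (cases "l = j") auto
  qed
  then show "(if \<forall>l. \<alpha> l \<le> \<gamma> l then emb n k j m f \<alpha> * emb n k j m' g (\<lambda>l. \<gamma> l - \<alpha> l) else 0) = 0"
    using off by (auto simp: emb_def)
qed

lemma pmul_emb_on_shape:
  fixes f g :: "'a::field tpoly"
  assumes jk: "j \<noteq> k" and kn: "k < n"
    and \<gamma>: "\<gamma> \<in> idx CHAR('a) n" and on: "emb_shape k j (m + m') \<gamma>"
  shows "pmul n (emb n k j m f) (emb n k j m' g) \<gamma> = pmul 1 f g (mono1 (\<gamma> k))"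
proof -
  let ?I = "idx CHAR('a) n"
  let ?X = "\<lambda>\<alpha>. if \<forall>l. \<alpha> l \<le> \<gamma> l then emb n k j m f \<alpha> * emb n k j m' g (\<lambda>l. \<gamma> l - \<alpha> l) else 0"
  define e where "e = (\<lambda>a l. if l = k then a else if l = j then m else (0::nat))"
  have \<gamma>k: "\<gamma> k < CHAR('a)" and \<gamma>j: "\<gamma> j = m + m'"
    using \<gamma> on jk by (auto simp: idx_def emb_shape_def)
  have e_idx: "e a \<in> ?I" if "a \<le> \<gamma> k" for a
  proof -
    have "\<gamma> j < CHAR('a)" "n \<le> j \<Longrightarrow> \<gamma> j = 0"
      using \<gamma> by (auto simp: idx_def)
    then show ?thesis
      using that \<gamma>k \<gamma>j kn by (auto simp: e_def idx_def)
  qed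
  have zero: "?X \<alpha> = 0" if "\<alpha> \<notin> e ` {..\<gamma> k}" for \<alpha>
  proof (rule ccontr)
    assume "?X \<alpha> \<noteq> 0"
    then have le: "\<forall>l. \<alpha> l \<le> \<gamma> l" and "emb_shape k j m \<alpha>"
      by (auto simp: emb_def split: if_splits)
    then have "\<alpha> = e (\<alpha> k)"
      unfolding e_def emb_shape_def by (intro ext) auto
    moreover have "\<alpha> k \<in> {..\<gamma> k}"
      using le by auto
    ultimately show False
      using that by blast
  qed
  have "inj_on e {..\<gamma> k}"
    by (rule inj_onI) (metis e_def)
  have "pmul n (emb n k j m f) (emb n k j m' g) \<gamma> = sum (?X \<circ> e) {..\<gamma> k}"
    unfolding pmul_as_convolution[OF \<gamma>]
    by (rule sum_reindex_support[OF finite_idx \<open>inj_on e {..\<gamma> k}\<close>]) (use e_idx zero in auto)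
  also have "\<dots> = (\<Sum>a\<le>\<gamma> k. f (mono1 a) * g (mono1 (\<gamma> k - a)))"
  proof (rule sum.cong[OF refl])
    fix a
    assume a: "a \<in> {..\<gamma> k}"
    then have "\<forall>l. e a l \<le> \<gamma> l" "emb_shape k j m (e a)" "emb_shape k j m' (\<lambda>l. \<gamma> l - e a l)"
      using on \<gamma>j jk unfolding e_def emb_shape_def by auto
    then show "(?X \<circ> e) a = f (mono1 a) * g (mono1 (\<gamma> k - a))"
      using e_idx[of a] a diff_in_idx[OF \<gamma>] by (simp add: emb_def e_def)
  qed
  also have "\<dots> = pmul 1 f g (mono1 (\<gamma> k))"
    by (rule pmul1_mono1[OF \<gamma>k, symmetric])
  finally show ?thesis .
qed

lemma pmul_emb:
  fixes f g :: "'a::field tpoly"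
  assumes "j \<noteq> k" "k < n"
  shows "pmul n (emb n k j m f) (emb n k j m' g) = emb n k j (m + m') (pmul 1 f g)"
proof (rule ext)
  fix \<gamma>
  consider "\<gamma> \<notin> idx CHAR('a) n" | "\<gamma> \<in> idx CHAR('a) n" "\<not> emb_shape k j (m + m') \<gamma>"
    | "\<gamma> \<in> idx CHAR('a) n" "emb_shape k j (m + m') \<gamma>"
    by blast
  then show "pmul n (emb n k j m f) (emb n k j m' g) \<gamma> = emb n k j (m + m') (pmul 1 f g) \<gamma>"
  proof cases
    case 1
    then show ?thesis unfolding pmul_outside_idx[OF 1] by (simp add: emb_def)
  next
    case 2
    then show ?thesis unfolding pmul_emb_off_shape[OF 2] by (simp add: emb_def)
  next
    case 3
    then show ?thesis unfolding pmul_emb_on_shape[OF assms 3] by (simp add: emb_def)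
  qed
qed

lemma pmul_emb_base:
  fixes f g :: "'a::field tpoly"
  assumes "k < n"
  shows "pmul n (emb n k k 0 f) (emb n k k 0 g) = emb n k k 0 (pmul 1 f g)"
  using pmul_emb[of "Suc k" k n 0 f 0 g] assms by (simp add: emb_exponent_0)

lemma emb_shape_fun_upd_base [simp]: "emb_shape k j m (\<beta>(k := x)) = emb_shape k j m \<beta>"
  by (auto simp: emb_shape_def)

lemma pd_emb_base:
  fixes f :: "'a::field tpoly"
  assumes kn: "k < n"
  shows "pd n k (emb n k j m f) = emb n k j m (pd 1 0 f)"
proof (rule ext)
  fix \<beta>
  show "pd n k (emb n k j m f) \<beta> = emb n k j m (pd 1 0 f) \<beta>"
  proof (cases "\<beta> \<in> idx CHAR('a) n")
    case False
    then show ?thesis by (simp add: pd_def emb_def)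
  next
    case True
    then have "\<beta> k < CHAR('a)"
      by (simp add: idx_def)
    have "pd n k (emb n k j m f) \<beta> = (if Suc (\<beta> k) < CHAR('a)
        then of_nat (Suc (\<beta> k)) * emb n k j m f (\<beta>(k := Suc (\<beta> k))) else 0)"
      using True fun_upd_in_idx[OF True kn] by (simp add: pd_def)
    also have "\<dots> = emb n k j m (pd 1 0 f) \<beta>"
      using True \<open>\<beta> k < CHAR('a)\<close> fun_upd_in_idx[OF True kn]
      by (simp add: emb_def pd1_mono1 Suc_eq_plus1)
    finally show ?thesis .
  qed
qed

lemma pd_emb_linear:
  fixes f :: "'a::field tpoly"
  assumes jk: "j \<noteq> k" and jn: "j < n" and p1: "1 < CHAR('a)"
  shows "pd n j (emb n k j 1 f) = emb n k j 0 f"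
proof (rule ext)
  fix \<beta>
  show "pd n j (emb n k j 1 f) \<beta> = emb n k j 0 f \<beta>"
  proof (cases "\<beta> \<in> idx CHAR('a) n")
    case False
    then show ?thesis by (simp add: pd_def emb_def)
  next
    case True
    have "emb_shape k j 1 (\<beta>(j := Suc (\<beta> j))) \<longleftrightarrow> emb_shape k j 0 \<beta>"
      unfolding emb_shape_def
    proof (intro iffI allI impI)
      fix l
      assume "\<forall>l. l \<noteq> k \<longrightarrow> (\<beta>(j := Suc (\<beta> j))) l = (if l = j then 1 else 0)" "l \<noteq> k"
      then show "\<beta> l = (if l = j then 0 else 0)"
        by (cases "l = j") (auto simp: One_nat_def)
    next
      fix l
      assume "\<forall>l. l \<noteq> k \<longrightarrow> \<beta> l = (if l = j then 0 else 0)" "l \<noteq> k"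
      then show "(\<beta>(j := Suc (\<beta> j))) l = (if l = j then 1 else 0)"
        using jk by (cases "l = j") (auto simp: One_nat_def)
    qed
    moreover have "emb_shape k j 0 \<beta> \<Longrightarrow> \<beta> j = 0"
      using jk unfolding emb_shape_def by auto
    ultimately show ?thesis
      using True fun_upd_in_idx[OF True jn, of "Suc (\<beta> j)"] p1 jk
      by (auto simp add: pd_def emb_def One_nat_def)
  qed
qed

lemma pd_emb_other:
  assumes "l \<noteq> k" "l \<noteq> j"
  shows "pd n l (emb n k j m (f::'a::field tpoly)) = (\<lambda>_. 0)"
proof (rule ext)
  fix \<beta>
  have "\<not> emb_shape k j m (\<beta>(l := Suc (\<beta> l)))"
    using assms unfolding emb_shape_def by auto
  then show "pd n l (emb n k j m f) \<beta> = 0"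
    by (simp add: pd_def emb_def)
qed

lemma xmon_eq_emb:
  assumes kn: "k < n"
  shows "xmon n (\<lambda>l. if l = k then a else if l = j then m else 0) = emb n k j m (xpow1 a :: 'a::field tpoly)"
proof (rule ext)
  fix \<gamma>
  let ?e = "\<lambda>l. if l = k then a else if l = j then m else (0::nat)"
  have "\<gamma> = ?e \<longleftrightarrow> emb_shape k j m \<gamma> \<and> \<gamma> k = a"
    unfolding emb_shape_def by (auto simp: fun_eq_iff)
  moreover have "\<gamma> \<in> idx CHAR('a) n \<Longrightarrow> \<gamma> k < CHAR('a)"
    by (simp add: idx_def)
  moreover have "?e \<in> idx CHAR('a) n \<Longrightarrow> a < CHAR('a)"
    by (auto simp: idx_def dest!: spec[where x=k])
  ultimately show "(xmon n ?e :: 'a tpoly) \<gamma> = emb n k j m (xpow1 a) \<gamma>"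
    unfolding xmon_def emb_def xpow1_mono1 by auto
qed

lemma xvar_eq_emb:
  assumes "j \<noteq> k" "k < n"
  shows "xvar n j = emb n k j 1 (xpow1 0 :: 'a::field tpoly)"
proof -
  have "eps j = (\<lambda>l. if l = k then 0 else if l = j then 1 else 0)"
    using assms by (auto simp: eps_def)
  then show ?thesis
    unfolding xvar_def by (simp add: xmon_eq_emb[OF assms(2)])
qed

lemma xvar_eq_emb_base:
  assumes "k < n"
  shows "xvar n k = emb n k k 0 (xvar 1 0 :: 'a::field tpoly)"
proof -
  have "eps k = (\<lambda>l. if l = k then 1 else if l = k then 0 else 0)"
    by (auto simp: eps_def)
  then show ?thesis
    unfolding xvar1_eq_xpow1 unfolding xvar_def by (simp add: xmon_eq_emb[OF assms])
qed


section \<open>The \<open>p\<close>-th power of a twisted derivation\<close>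

lemma sum_choose_pascal:
  fixes Y :: "nat \<Rightarrow> 'a::comm_ring_1"
  shows "(\<Sum>i\<le>s. of_nat (s choose i) * (Y (Suc i) + Y i)) = (\<Sum>i\<le>Suc s. of_nat (Suc s choose i) * Y i)"
proof -
  have A: "(\<Sum>i\<le>Suc s. of_nat (Suc s choose i) * Y i)
      = Y 0 + (\<Sum>i\<le>s. of_nat (s choose i) * Y (Suc i)) + (\<Sum>i\<le>s. of_nat (s choose Suc i) * Y (Suc i))"
    by (subst sum.atMost_Suc_shift) (simp add: distrib_right sum.distrib del: sum.atMost_Suc)
  have "(\<Sum>i\<le>s. of_nat (s choose i) * Y i) = (\<Sum>i\<le>Suc s. of_nat (s choose i) * Y i)"
    by (simp add: binomial_eq_0)
  also have "\<dots> = Y 0 + (\<Sum>i\<le>s. of_nat (s choose Suc i) * Y (Suc i))"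
    by (subst sum.atMost_Suc_shift) (simp del: sum.atMost_Suc)
  finally have B: "(\<Sum>i\<le>s. of_nat (s choose i) * Y i) = Y 0 + (\<Sum>i\<le>s. of_nat (s choose Suc i) * Y (Suc i))" .
  show ?thesis
    unfolding A distrib_left sum.distrib B by (simp add: ac_simps)
qed

lemma funpow_leibniz:
  fixes U S T :: "('x \<Rightarrow> 'a::comm_ring_1) \<Rightarrow> ('x \<Rightarrow> 'a)"
    and M :: "('x \<Rightarrow> 'a) \<Rightarrow> ('x \<Rightarrow> 'a) \<Rightarrow> ('x \<Rightarrow> 'a)"
  assumes leibniz: "\<And>a b. a \<in> C \<Longrightarrow> b \<in> C \<Longrightarrow> U (M a b) = (\<lambda>\<gamma>. M (S a) b \<gamma> + M a (T b) \<gamma>)"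
    and S_closed: "\<And>a. a \<in> C \<Longrightarrow> S a \<in> C" and T_closed: "\<And>a. a \<in> C \<Longrightarrow> T a \<in> C"
    and U_linear: "\<And>(c::nat \<Rightarrow> 'a) X A. finite A \<Longrightarrow>
      U (\<lambda>\<gamma>. \<Sum>i\<in>A. c i * X i \<gamma>) = (\<lambda>\<gamma>. \<Sum>i\<in>A. c i * U (X i) \<gamma>)"
    and a: "a \<in> C" and b: "b \<in> C"
  shows "(U ^^ s) (M a b) = (\<lambda>\<gamma>. \<Sum>i\<le>s. of_nat (s choose i) * M ((S ^^ i) a) ((T ^^ (s - i)) b) \<gamma>)"
proof (induction s)
  case 0
  show ?case by simp
next
  case (Suc s)
  have S_pow: "(S ^^ i) a \<in> C" for i
    by (induction i) (simp_all add: a S_closed)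
  have T_pow: "(T ^^ i) b \<in> C" for i
    by (induction i) (simp_all add: b T_closed)
  have "(U ^^ Suc s) (M a b) = (\<lambda>\<gamma>. \<Sum>i\<le>s. of_nat (s choose i) * U (M ((S ^^ i) a) ((T ^^ (s - i)) b)) \<gamma>)"
    unfolding funpow.simps o_apply Suc.IH by (rule U_linear) simp
  also have "\<dots> = (\<lambda>\<gamma>. \<Sum>i\<le>s. of_nat (s choose i) *
      (M ((S ^^ Suc i) a) ((T ^^ (Suc s - Suc i)) b) \<gamma> + M ((S ^^ i) a) ((T ^^ (Suc s - i)) b) \<gamma>))"
  proof (intro ext sum.cong refl)
    fix \<gamma> i
    assume "i \<in> {..s}"
    then have "Suc s - i = Suc (s - i)" by simp
    then show "of_nat (s choose i) * U (M ((S ^^ i) a) ((T ^^ (s - i)) b)) \<gamma> =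
      of_nat (s choose i) * (M ((S ^^ Suc i) a) ((T ^^ (Suc s - Suc i)) b) \<gamma>
        + M ((S ^^ i) a) ((T ^^ (Suc s - i)) b) \<gamma>)"
      unfolding leibniz[OF S_pow T_pow] by simp
  qed
  also have "\<dots> = (\<lambda>\<gamma>. \<Sum>i\<le>Suc s. of_nat (Suc s choose i) * M ((S ^^ i) a) ((T ^^ (Suc s - i)) b) \<gamma>)"
    by (rule ext, rule sum_choose_pascal[of s "\<lambda>i. M ((S ^^ i) a) ((T ^^ (Suc s - i)) b) _",
          simplified mult.assoc])
  finally show ?case .
qed

lemma sum_choose_CHAR:
  fixes Z :: "nat \<Rightarrow> 'a::field"
  assumes "prime CHAR('a)"
  shows "(\<Sum>i\<le>CHAR('a). of_nat (CHAR('a) choose i) * Z i) = Z 0 + Z CHAR('a)"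
proof -
  let ?p = "CHAR('a)"
  have "?p \<noteq> 0" using assms by auto
  have "(\<Sum>i\<le>?p. of_nat (?p choose i) * Z i) = (\<Sum>i\<in>{0, ?p}. of_nat (?p choose i) * Z i)"
  proof (intro sum.mono_neutral_right ballI)
    fix i
    assume "i \<in> {..?p} - {0, ?p}"
    then have "?p dvd (?p choose i)"
      using assms by (intro dvd_choose_prime) auto
    then show "of_nat (?p choose i) * Z i = 0"
      by (simp add: of_nat_eq_0_iff_char_dvd)
  qed auto
  also have "\<dots> = Z 0 + Z ?p"
    using \<open>?p \<noteq> 0\<close> by simp
  finally show ?thesis .
qed

definition act1 :: "'a::field tpoly \<Rightarrow> 'a tpoly \<Rightarrow> 'a tpoly" where
  "act1 f h = pmul 1 f (pd 1 0 h)"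

text \<open>The lift of \<open>f\<partial>\<close> acts on \<open>x\<^sub>j h(x\<^sub>k)\<close>, \<open>j \<in> J\<close>, through \<open>twist f \<lambda>\<close>.\<close>

definition twist :: "'a::field tpoly \<Rightarrow> 'a \<Rightarrow> 'a tpoly \<Rightarrow> 'a tpoly" where
  "twist f \<mu> h = (\<lambda>\<gamma>. pmul 1 f (pd 1 0 h) \<gamma> + \<mu> * pmul 1 (pd 1 0 f) h \<gamma>)"

lemma twist_in_tpa: "twist f \<mu> h \<in> tpa 1"
  by (simp add: twist_def tpa_def pmul_outside_idx)

lemma funpow_twist_in_tpa: "h \<in> tpa 1 \<Longrightarrow> (twist f \<mu> ^^ i) h \<in> tpa 1"
  by (cases i) (simp_all add: twist_in_tpa)

lemma funpow_act1_in_tpa: "h \<in> tpa 1 \<Longrightarrow> (act1 f ^^ i) h \<in> tpa 1"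
  by (cases i) (simp_all add: act1_def pmul_in_tpa)

lemma twist_linear:
  "finite A \<Longrightarrow> twist f \<mu> (\<lambda>\<gamma>. \<Sum>i\<in>A. c i * X i \<gamma>) = (\<lambda>\<gamma>. \<Sum>i\<in>A. c i * twist f \<mu> (X i) \<gamma>)"
  by (simp add: twist_def pd_sum pd_smul pmul_sum_right pmul_smul_right sum.distrib distrib_left
      sum_distrib_left ac_simps)

lemma twist_zero: "twist f \<mu> (\<lambda>_. 0) = (\<lambda>_. 0)"
  by (simp add: twist_def pd_zero pmul_zero_right pmul_zero_left)

lemma twist_pmul:
  fixes f h k :: "'a::field tpoly"
  assumes "f \<in> tpa 1" "h \<in> tpa 1" "k \<in> tpa 1"
  shows "twist f (\<mu> + \<nu>) (pmul 1 h k) = (\<lambda>\<gamma>. pmul 1 (twist f \<mu> h) k \<gamma> + pmul 1 h (twist f \<nu> k) \<gamma>)"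
proof (rule ext)
  fix \<gamma>
  let ?f' = "pd 1 0 f" and ?h' = "pd 1 0 h" and ?k' = "pd 1 0 k"
  have "twist f (\<mu> + \<nu>) (pmul 1 h k) \<gamma> = pmul 1 f (pmul 1 ?h' k) \<gamma> + pmul 1 f (pmul 1 h ?k') \<gamma>
      + \<mu> * pmul 1 ?f' (pmul 1 h k) \<gamma> + \<nu> * pmul 1 ?f' (pmul 1 h k) \<gamma>"
    unfolding twist_def pd1_pmul[OF assms(2,3)] pmul_add_right by (simp add: algebra_simps)
  also have "\<dots> = pmul 1 (pmul 1 f ?h') k \<gamma> + pmul 1 h (pmul 1 f ?k') \<gamma>
      + \<mu> * pmul 1 (pmul 1 ?f' h) k \<gamma> + \<nu> * pmul 1 h (pmul 1 ?f' k) \<gamma>"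
    by (simp add: pmul_assoc pmul_left_commute[of 1 f h] pmul_left_commute[of 1 ?f' h])
  also have "\<dots> = pmul 1 (twist f \<mu> h) k \<gamma> + pmul 1 h (twist f \<nu> k) \<gamma>"
    unfolding twist_def pmul_add_left pmul_add_right pmul_smul_left pmul_smul_right by simp
  finally show "twist f (\<mu> + \<nu>) (pmul 1 h k) \<gamma> = pmul 1 (twist f \<mu> h) k \<gamma> + pmul 1 h (twist f \<nu> k) \<gamma>" .
qed

lemma twist_pow_add:
  fixes f :: "'a::field tpoly"
  assumes f: "f \<in> tpa 1" and p: "prime CHAR('a)"
  shows "(twist f (\<mu> + \<nu>) ^^ CHAR('a)) (xpow1 0)
    = (\<lambda>\<gamma>. (twist f \<mu> ^^ CHAR('a)) (xpow1 0) \<gamma> + (twist f \<nu> ^^ CHAR('a)) (xpow1 0) \<gamma>)"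
proof -
  let ?p = "CHAR('a)"
  have p0: "0 < ?p"
    using p prime_gt_0_nat by blast
  have "(twist f (\<mu> + \<nu>) ^^ ?p) (xpow1 0) = (twist f (\<mu> + \<nu>) ^^ ?p) (pmul 1 (xpow1 0) (xpow1 0))"
    by (simp add: pmul_xpow1_0_left[OF xpow1_in_tpa p0])
  also have "\<dots> = (\<lambda>\<gamma>. \<Sum>i\<le>?p. of_nat (?p choose i)
      * pmul 1 ((twist f \<mu> ^^ i) (xpow1 0)) ((twist f \<nu> ^^ (?p - i)) (xpow1 0)) \<gamma>)"
    by (rule funpow_leibniz[where C="tpa 1"])
       (auto simp: twist_pmul[OF f] twist_in_tpa twist_linear xpow1_in_tpa)
  also have "\<dots> = (\<lambda>\<gamma>. pmul 1 (xpow1 0) ((twist f \<nu> ^^ ?p) (xpow1 0)) \<gamma>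
      + pmul 1 ((twist f \<mu> ^^ ?p) (xpow1 0)) (xpow1 0) \<gamma>)"
    by (rule ext, subst sum_choose_CHAR[OF p]) simp
  also have "\<dots> = (\<lambda>\<gamma>. (twist f \<mu> ^^ ?p) (xpow1 0) \<gamma> + (twist f \<nu> ^^ ?p) (xpow1 0) \<gamma>)"
    by (simp add: pmul_xpow1_0_left pmul_xpow1_0_right funpow_twist_in_tpa xpow1_in_tpa p0 add.commute)
  finally show ?thesis .
qed

lemma twist_pow_zero:
  assumes "0 < CHAR('a)"
  shows "(twist f 0 ^^ CHAR('a)) (xpow1 0) = (\<lambda>_. 0::'a::field)"
proof -
  obtain q where q: "CHAR('a) = Suc q"
    using assms by (cases "CHAR('a)") auto
  have "(twist f 0 ^^ i) (\<lambda>_. 0) = (\<lambda>_. 0)" for i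
    by (induction i) (simp_all add: twist_zero)
  moreover have "twist f 0 (xpow1 0) = (\<lambda>_. 0)"
    by (simp add: twist_def pd_xpow1_0[OF assms] pmul_zero_right)
  ultimately show ?thesis
    unfolding q funpow_Suc_right o_def by simp
qed

lemma twist_1_eq_pd_pmul:
  fixes f :: "'a::field tpoly"
  assumes "f \<in> tpa 1" "h \<in> tpa 1"
  shows "twist f 1 h = pd 1 0 (pmul 1 f h)"
  unfolding pd1_pmul[OF assms] twist_def by (rule ext) simp

lemma funpow_twist_1:
  fixes f :: "'a::field tpoly"
  assumes f: "f \<in> tpa 1" and h: "h \<in> tpa 1"
  shows "(twist f 1 ^^ Suc s) h = pd 1 0 ((act1 f ^^ s) (pmul 1 f h))"
proof (induction s)
  case 0
  then show ?case by (simp add: twist_1_eq_pd_pmul[OF f h])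
next
  case (Suc s)
  have "(twist f 1 ^^ Suc (Suc s)) h = twist f 1 ((twist f 1 ^^ Suc s) h)"
    by simp
  also have "\<dots> = twist f 1 (pd 1 0 ((act1 f ^^ s) (pmul 1 f h)))"
    by (simp only: Suc.IH)
  also have "\<dots> = pd 1 0 ((act1 f ^^ Suc s) (pmul 1 f h))"
    by (simp add: twist_1_eq_pd_pmul[OF f pd_in_tpa] act1_def)
  finally show ?case .
qed

lemma twist_pow_1:
  fixes f :: "'a::field tpoly"
  assumes f: "f \<in> tpa 1" and p: "1 < CHAR('a)"
  shows "(twist f 1 ^^ CHAR('a)) (xpow1 0) = pd 1 0 ((act1 f ^^ CHAR('a)) (xvar 1 0))"
proof -
  obtain q where q: "CHAR('a) = Suc q"
    using p by (cases "CHAR('a)") auto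
  have "pmul 1 f (xpow1 0) = f" "act1 f (xvar 1 0) = f"
    using p by (simp_all add: act1_def pd_xvar1 pmul_xpow1_0_right[OF f])
  moreover have "(act1 f ^^ Suc q) (xvar 1 0) = (act1 f ^^ q) (act1 f (xvar 1 0))"
    by (simp only: funpow_Suc_right o_def)
  ultimately show ?thesis
    unfolding q funpow_twist_1[OF f xpow1_in_tpa] by simp
qed

lemma twist_pow_of_nat:
  fixes f :: "'a::field tpoly"
  assumes f: "f \<in> tpa 1" and p: "prime CHAR('a)"
  shows "(twist f (of_nat m) ^^ CHAR('a)) (xpow1 0)
    = (\<lambda>\<gamma>. of_nat m * pd 1 0 ((act1 f ^^ CHAR('a)) (xvar 1 0)) \<gamma>)"
proof (induction m)
  case 0
  then show ?case
    using p by (simp add: twist_pow_zero prime_gt_0_nat)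
next
  case (Suc m)
  then show ?case
    unfolding of_nat_Suc twist_pow_add[OF f p] twist_pow_1[OF f prime_gt_1_nat[OF p]]
    by (simp add: algebra_simps)
qed


section \<open>Lifting derivations of \<open>A(1)\<close> to \<open>W(n)\<close>\<close>

definition bracket1 :: "'a::field tpoly \<Rightarrow> 'a tpoly \<Rightarrow> 'a tpoly" where
  "bracket1 f g = (\<lambda>\<gamma>. pmul 1 f (pd 1 0 g) \<gamma> - pmul 1 g (pd 1 0 f) \<gamma>)"

text \<open>\<open>lift n k J lam f\<close> is \<open>f(x\<^sub>k)\<partial>\<^sub>k + lam f'(x\<^sub>k) \<Sum>\<^sub>j\<^sub>\<in>\<^sub>J x\<^sub>j\<partial>\<^sub>j\<close>.\<close>

definition lift :: "nat \<Rightarrow> nat \<Rightarrow> nat set \<Rightarrow> 'a::field \<Rightarrow> 'a tpoly \<Rightarrow> 'a wder" where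
  "lift n k J lam f = (\<lambda>l. if l = k then emb n k k 0 f
      else if l \<in> J then psmul lam (emb n k l 1 (pd 1 0 f)) else pzero)"

lemma bracket1_in_tpa: "bracket1 f g \<in> tpa 1"
  by (simp add: bracket1_def tpa_def pmul_outside_idx)

lemma twist_pd_bracket1:
  fixes f g :: "'a::field tpoly"
  assumes f: "f \<in> tpa 1" and g: "g \<in> tpa 1"
  shows "(\<lambda>\<gamma>. twist f lam (pd 1 0 g) \<gamma> - twist g lam (pd 1 0 f) \<gamma>) = pd 1 0 (bracket1 f g)"
  unfolding bracket1_def pd_diff pd1_pmul[OF f pd_in_tpa] pd1_pmul[OF g pd_in_tpa] twist_def
    pmul_commute[of 1 "pd 1 0 g" "pd 1 0 f"]
  by (rule ext) (simp add: algebra_simps)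

lemma lift_smul: "lift n k J lam (\<lambda>\<gamma>. c * f \<gamma>) = wsmul c (lift n k J lam (f::'a::field tpoly))"
  by (intro ext) (simp add: lift_def wsmul_def psmul_def emb_smul pd_smul pzero_def ac_simps)

lemma lift_coeff_linear: "\<exists>A B. \<forall>f. lift n k J lam f l \<gamma> = A * (f::'a::field tpoly) B"
proof (cases "l = k")
  case True
  then show ?thesis
    by (intro exI[of _ "if \<gamma> \<in> idx CHAR('a) n \<and> emb_shape k k 0 \<gamma> then 1 else 0"] exI[of _ "mono1 (\<gamma> k)"])
       (simp add: lift_def emb_as_product)
next
  case False
  show ?thesis
  proof (cases "l \<in> J")
    case True
    let ?A = "lam * ((if \<gamma> \<in> idx CHAR('a) n \<and> emb_shape k l 1 \<gamma> then 1 else 0) *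
        (if mono1 (\<gamma> k) \<in> idx CHAR('a) 1 \<and> mono1 (Suc (\<gamma> k)) \<in> idx CHAR('a) 1
         then of_nat (Suc (\<gamma> k)) else 0))"
    show ?thesis
      using False True unfolding lift_def psmul_def emb_as_product pd_as_product
      by (intro exI[of _ ?A] exI[of _ "mono1 (Suc (\<gamma> k))"]) (simp add: ac_simps)
  next
    case False
    then show ?thesis
      using \<open>l \<noteq> k\<close> by (intro exI[of _ 0]) (simp add: lift_def pzero_def)
  qed
qed

lemma tpa1_expansion:
  fixes f :: "'a::field tpoly"
  assumes f: "f \<in> tpa 1"
  shows "(\<Sum>i<CHAR('a). f (mono1 i) * xpow1 i B) = f B"
proof (cases "B \<in> idx CHAR('a) 1")
  case True
  then have B: "B = mono1 (B 0)" "B 0 < CHAR('a)"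
    by (rule idx1_eq_mono1, simp add: idx_def)
  have "(\<Sum>i<CHAR('a). f (mono1 i) * xpow1 i B) = (\<Sum>i<CHAR('a). if i = B 0 then f (mono1 i) else 0)"
    by (rule sum.cong[OF refl], subst B(1)) (auto simp: xpow1_mono1)
  also have "\<dots> = f B"
    using B by simp
  finally show ?thesis .
next
  case False
  then have "xpow1 i B = (0::'a)" for i
    by (auto simp: xmon_def)
  then show ?thesis
    using f False by (simp add: tpa_def)
qed

lemma theta_eq_lift:
  fixes img :: "nat \<Rightarrow> 'a::field wder"
  assumes img: "\<And>i. i < CHAR('a) \<Longrightarrow> img i = lift n k J lam (xpow1 i)"
    and D: "D 0 \<in> tpa 1"
  shows "theta img D = lift n k J lam (D 0)"
proof (intro ext)
  fix l \<gamma>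
  obtain A B where AB: "\<And>f. lift n k J lam f l \<gamma> = A * (f::'a tpoly) B"
    using lift_coeff_linear by blast
  have "theta img D l \<gamma> = (\<Sum>i<CHAR('a). D 0 (mono1 i) * (A * xpow1 i B))"
    unfolding theta_def mono1_def[symmetric] by (rule sum.cong[OF refl]) (simp add: img AB)
  also have "\<dots> = A * (\<Sum>i<CHAR('a). D 0 (mono1 i) * xpow1 i B)"
    by (simp add: sum_distrib_left ac_simps)
  also have "\<dots> = lift n k J lam (D 0) l \<gamma>"
    by (simp add: tpa1_expansion[OF D] AB)
  finally show "theta img D l \<gamma> = lift n k J lam (D 0) l \<gamma>" .
qed

lemma wact_eq_single_term:
  assumes "k < n" and "\<And>l. l < n \<Longrightarrow> l \<noteq> k \<Longrightarrow> pmul n (D l) (pd n l h) = (\<lambda>_. 0::'a::field)"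
  shows "wact n D h = pmul n (D k) (pd n k h)"
proof (rule ext)
  fix \<gamma>
  have "(\<Sum>i<n. pmul n (D i) (pd n i h) \<gamma>) = (\<Sum>i\<in>{k}. pmul n (D i) (pd n i h) \<gamma>)"
    by (rule sum.mono_neutral_right) (use assms in \<open>auto simp: fun_eq_iff\<close>)
  then show "wact n D h \<gamma> = pmul n (D k) (pd n k h) \<gamma>"
    by (simp add: wact_def)
qed

lemma wact_eq_two_terms:
  assumes "k < n" "j < n" "j \<noteq> k"
    and "\<And>l. l < n \<Longrightarrow> l \<noteq> k \<Longrightarrow> l \<noteq> j \<Longrightarrow> pmul n (D l) (pd n l h) = (\<lambda>_. 0::'a::field)"
  shows "wact n D h = (\<lambda>\<gamma>. pmul n (D k) (pd n k h) \<gamma> + pmul n (D j) (pd n j h) \<gamma>)"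
proof (rule ext)
  fix \<gamma>
  have "(\<Sum>i<n. pmul n (D i) (pd n i h) \<gamma>) = (\<Sum>i\<in>{k, j}. pmul n (D i) (pd n i h) \<gamma>)"
    by (rule sum.mono_neutral_right) (use assms in \<open>auto simp: fun_eq_iff\<close>)
  then show "wact n D h \<gamma> = pmul n (D k) (pd n k h) \<gamma> + pmul n (D j) (pd n j h) \<gamma>"
    using assms(3) by (simp add: wact_def)
qed

lemma wact_zero: "wact n D (\<lambda>_. 0::'a::field) = (\<lambda>_. 0)"
  by (rule ext) (simp add: wact_def pd_zero pmul_zero_right)

lemma wact_smul: "wact n D (\<lambda>\<gamma>. c * h \<gamma>) = (\<lambda>\<gamma>. c * wact n D (h::'a::field tpoly) \<gamma>)"
  by (rule ext) (simp add: wact_def pd_smul pmul_smul_right sum_distrib_left)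

context
  fixes n k :: nat and J :: "nat set" and lam :: "'a::field"
  assumes kn: "k < n" and Jn: "J \<subseteq> {..<n}" and kJ: "k \<notin> J" and p1: "1 < CHAR('a)"
begin

lemma lift_outside: "l \<ge> n \<Longrightarrow> lift n k J lam f l = pzero"
  using kn Jn by (auto simp: lift_def)

lemma lift_in_Wn: "lift n k J lam f \<in> Wn n"
  unfolding Wn_def using lift_outside
  by (auto simp: lift_def emb_in_tpa psmul_def tpa_def pzero_def emb_def)

lemma lift_inj:
  assumes f: "f \<in> tpa 1" and g: "g \<in> tpa 1" and eq: "lift n k J lam f = lift n k J lam g"
  shows "f = g"
proof (rule tpa1_eqI[OF f g])
  fix c
  assume c: "c < CHAR('a)"
  let ?\<gamma> = "\<lambda>l. if l = k then c else (0::nat)"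
  have "?\<gamma> \<in> idx CHAR('a) n" "emb_shape k k 0 ?\<gamma>"
    using c kn by (auto simp: idx_def emb_shape_def)
  moreover have "emb n k k 0 f ?\<gamma> = emb n k k 0 g ?\<gamma>"
    using fun_cong[OF eq, of k] by (simp add: lift_def)
  ultimately show "f (mono1 c) = g (mono1 c)"
    by (simp add: emb_def)
qed

lemma wact_lift_emb_base: "wact n (lift n k J lam f) (emb n k k 0 h) = emb n k k 0 (act1 f h)"
proof -
  have "wact n (lift n k J lam f) (emb n k k 0 h) = pmul n (lift n k J lam f k) (pd n k (emb n k k 0 h))"
    by (rule wact_eq_single_term[OF kn]) (simp add: pd_emb_other pmul_zero_right)
  also have "\<dots> = emb n k k 0 (act1 f h)"
    by (simp add: lift_def act1_def pd_emb_base[OF kn] pmul_emb_base[OF kn])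
  finally show ?thesis .
qed

lemma wact_lift_emb_J:
  assumes "j \<in> J"
  shows "wact n (lift n k J lam f) (emb n k j 1 h) = emb n k j 1 (twist f lam h)"
proof -
  have jn: "j < n" and jk: "j \<noteq> k"
    using assms Jn kJ by auto
  have base: "pmul n (emb n k k 0 f) (pd n k (emb n k j 1 h)) = emb n k j 1 (pmul 1 f (pd 1 0 h))"
    using pmul_emb[OF jk kn, of 0 f 1 "pd 1 0 h"] by (simp add: pd_emb_base[OF kn] emb_exponent_0[OF jk])
  have linear: "pmul n (emb n k j 1 (pd 1 0 f)) (pd n j (emb n k j 1 h)) = emb n k j 1 (pmul 1 (pd 1 0 f) h)"
    using pmul_emb[OF jk kn, of 1 "pd 1 0 f" 0 h] by (simp add: pd_emb_linear[OF jk jn p1])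
  have "wact n (lift n k J lam f) (emb n k j 1 h) =
     (\<lambda>\<gamma>. pmul n (lift n k J lam f k) (pd n k (emb n k j 1 h)) \<gamma>
         + pmul n (lift n k J lam f j) (pd n j (emb n k j 1 h)) \<gamma>)"
    by (rule wact_eq_two_terms[OF kn jn jk]) (simp add: pd_emb_other pmul_zero_right)
  also have "\<dots> = (\<lambda>\<gamma>. emb n k j 1 (pmul 1 f (pd 1 0 h)) \<gamma> + lam * emb n k j 1 (pmul 1 (pd 1 0 f) h) \<gamma>)"
    using assms jk by (simp add: lift_def psmul_def pmul_smul_left base linear)
  also have "\<dots> = emb n k j 1 (twist f lam h)"
    unfolding twist_def emb_add emb_smul ..
  finally show ?thesis .
qed

lemma wact_lift_emb_other:
  assumes "j < n" "j \<noteq> k" "j \<notin> J"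
  shows "wact n (lift n k J lam f) (emb n k j 1 (xpow1 0)) = (\<lambda>_. 0)"
proof -
  have "wact n (lift n k J lam f) (emb n k j 1 (xpow1 0))
      = pmul n (lift n k J lam f k) (pd n k (emb n k j 1 (xpow1 0)))"
  proof (rule wact_eq_single_term[OF kn])
    fix l
    assume "l < n" "l \<noteq> k"
    then show "pmul n (lift n k J lam f l) (pd n l (emb n k j 1 (xpow1 0))) = (\<lambda>_. 0)"
      using assms by (cases "l = j") (simp_all add: lift_def pzero_def pmul_zero_left pd_emb_other pmul_zero_right)
  qed
  also have "\<dots> = (\<lambda>_. 0)"
    using p1 by (simp add: lift_def pd_emb_base[OF kn] pd_xpow1_0 emb_zero pmul_zero_right)
  finally show ?thesis .
qed

lemma wbr_lift:
  assumes f: "f \<in> tpa 1" and g: "g \<in> tpa 1"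
  shows "wbr n (lift n k J lam f) (lift n k J lam g) = lift n k J lam (bracket1 f g)"
proof (rule ext)
  fix l
  consider "n \<le> l" | "l = k" | "l < n" "l \<noteq> k" "l \<in> J" | "l < n" "l \<noteq> k" "l \<notin> J"
    using kn by linarith
  then show "wbr n (lift n k J lam f) (lift n k J lam g) l = lift n k J lam (bracket1 f g) l"
  proof cases
    case 1
    then show ?thesis by (simp add: wbr_def lift_outside)
  next
    case 2
    then show ?thesis
      using kn by (simp add: wbr_def lift_def wact_lift_emb_base[unfolded lift_def] act1_def
          bracket1_def emb_diff)
  next
    case 3
    have "emb n k l 1 (pd 1 0 (bracket1 f g))
        = (\<lambda>\<gamma>. emb n k l 1 (twist f lam (pd 1 0 g)) \<gamma> - emb n k l 1 (twist g lam (pd 1 0 f)) \<gamma>)"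
      unfolding twist_pd_bracket1[OF f g, where lam = lam, symmetric] emb_diff ..
    then show ?thesis
      using 3 wact_lift_emb_J[OF \<open>l \<in> J\<close>]
      by (simp add: wbr_def lift_def psmul_def wact_smul right_diff_distrib)
  next
    case 4
    then show ?thesis
      by (simp add: wbr_def lift_def pzero_def wact_zero)
  qed
qed

lemma funpow_wact_lift_emb_base:
  "(wact n (lift n k J lam f) ^^ s) (emb n k k 0 h) = emb n k k 0 ((act1 f ^^ s) h)"
  by (induction s) (simp_all add: wact_lift_emb_base)

lemma funpow_wact_lift_emb_J:
  "j \<in> J \<Longrightarrow> (wact n (lift n k J lam f) ^^ s) (emb n k j 1 h) = emb n k j 1 ((twist f lam ^^ s) h)"
  by (induction s) (simp_all add: wact_lift_emb_J)

lemma wpow_lift: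
  assumes f: "f \<in> tpa 1" and p: "prime CHAR('a)" and lam_eq: "lam = of_nat m"
  shows "wpow n (lift n k J lam f) = lift n k J lam ((act1 f ^^ CHAR('a)) (xvar 1 0))"
proof (rule ext)
  fix l
  let ?D = "wact n (lift n k J lam f)"
  consider "n \<le> l" | "l = k" | "l < n" "l \<noteq> k" "l \<in> J" | "l < n" "l \<noteq> k" "l \<notin> J"
    using kn by linarith
  then show "wpow n (lift n k J lam f) l = lift n k J lam ((act1 f ^^ CHAR('a)) (xvar 1 0)) l"
  proof cases
    case 1
    then show ?thesis by (simp add: wpow_def lift_outside)
  next
    case 2
    have "(?D ^^ CHAR('a)) (xvar n k) = emb n k k 0 ((act1 f ^^ CHAR('a)) (xvar 1 0))"
      unfolding xvar_eq_emb_base[OF kn] funpow_wact_lift_emb_base ..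
    then show ?thesis
      using 2 kn by (simp add: wpow_def lift_def)
  next
    case 3
    have "(?D ^^ CHAR('a)) (xvar n l) = emb n k l 1 ((twist f lam ^^ CHAR('a)) (xpow1 0))"
      unfolding xvar_eq_emb[OF \<open>l \<noteq> k\<close> kn] funpow_wact_lift_emb_J[OF \<open>l \<in> J\<close>] ..
    also have "\<dots> = (\<lambda>\<gamma>. lam * emb n k l 1 (pd 1 0 ((act1 f ^^ CHAR('a)) (xvar 1 0))) \<gamma>)"
      unfolding lam_eq twist_pow_of_nat[OF f p] emb_smul ..
    finally show ?thesis
      using 3 by (simp add: wpow_def lift_def psmul_def)
  next
    case 4
    obtain q where q: "CHAR('a) = Suc q"
      using p1 by (cases "CHAR('a)") auto
    have zero: "(?D ^^ i) (\<lambda>_. 0) = (\<lambda>_. 0)" for i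
      by (induction i) (simp_all add: wact_zero)
    have "(?D ^^ CHAR('a)) (xvar n l) = (\<lambda>_. 0)"
      unfolding q funpow_Suc_right o_def xvar_eq_emb[OF \<open>l \<noteq> k\<close> kn] wact_lift_emb_other[OF 4] zero ..
    then show ?thesis
      using 4 by (simp add: wpow_def lift_def pzero_def)
  qed
qed

end


section \<open>Restricted homomorphisms from \<open>W(1)\<close>\<close>

lemma theta_add: "theta img (wadd D E) = wadd (theta img D) (theta img (E::'a::field wder))"
  by (intro ext) (simp add: theta_def wadd_def padd_def distrib_right sum.distrib)

lemma theta_smul: "theta img (wsmul c D) = wsmul c (theta img (D::'a::field wder))"
  by (intro ext) (simp add: theta_def wsmul_def psmul_def sum_distrib_left ac_simps)

lemma wact_1: "wact 1 D h = act1 (D 0) (h::'a::field tpoly)"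
  by (rule ext) (simp add: wact_def act1_def One_nat_def)

lemma wbr_1: "wbr 1 D E 0 = bracket1 (D 0) (E 0 :: 'a::field tpoly)"
  by (simp add: wbr_def wact_1 act1_def bracket1_def)

lemma wpow_1: "wpow 1 D 0 = (act1 (D 0) ^^ CHAR('a)) (xvar 1 0 :: 'a::field tpoly)"
  by (simp add: wpow_def wact_1[abs_def])

lemma Wn1_coeff_in_tpa: "D \<in> Wn 1 \<Longrightarrow> D 0 \<in> tpa 1"
  by (simp add: Wn_def)

lemma Wn1_eqI:
  assumes "D \<in> Wn 1" "E \<in> Wn 1" "D 0 = E 0"
  shows "D = E"
proof
  fix i
  show "D i = E i"
    using assms by (cases "i = 0") (simp_all add: Wn_def)
qed

lemma inj_on_theta_lift:
  fixes img :: "nat \<Rightarrow> 'a::field wder"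
  assumes "k < n" "J \<subseteq> {..<n}" "k \<notin> J" "1 < CHAR('a)"
    and img: "\<And>i. i < CHAR('a) \<Longrightarrow> img i = lift n k J lam (xpow1 i)"
  shows "inj_on (theta img) (Wn 1)"
proof (rule inj_onI)
  fix D E :: "'a wder"
  assume D: "D \<in> Wn 1" and E: "E \<in> Wn 1" and "theta img D = theta img E"
  then have "lift n k J lam (D 0) = lift n k J lam (E 0)"
    using Wn1_coeff_in_tpa[OF D] Wn1_coeff_in_tpa[OF E] theta_eq_lift[OF img] by simp
  then show "D = E"
    using D E lift_inj[OF assms(1-4) Wn1_coeff_in_tpa[OF D] Wn1_coeff_in_tpa[OF E]]
    by (blast intro: Wn1_eqI)
qed

lemma inj_rhom_theta_lift:
  fixes img :: "nat \<Rightarrow> 'a::field wder"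
  assumes kn: "k < n" and Jn: "J \<subseteq> {..<n}" and kJ: "k \<notin> J" and p: "prime CHAR('a)"
    and lam_eq: "lam = of_nat m"
    and img: "\<And>i. i < CHAR('a) \<Longrightarrow> img i = lift n k J lam (xpow1 i)"
    and in_L: "\<And>D. D \<in> Wn 1 \<Longrightarrow> theta img D \<in> L"
  shows "inj_rhom n L (theta img)"
  unfolding inj_rhom_def
proof (intro conjI ballI allI)
  have p1: "1 < CHAR('a)"
    using p prime_gt_1_nat by blast
  have theta: "theta img D = lift n k J lam (D 0)" if "D 0 \<in> tpa 1" for D
    using img that by (rule theta_eq_lift)
  note lift_facts = wbr_lift[OF kn Jn kJ p1] wpow_lift[OF kn Jn kJ p1 _ p lam_eq]
    lift_inj[OF kn Jn kJ p1]
  fix D E :: "'a wder"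
  show "theta img (wadd D E) = wadd (theta img D) (theta img E)"
    by (rule theta_add)
  show "theta img (wsmul c D) = wsmul c (theta img D)" for c
    by (rule theta_smul)
  assume D: "D \<in> Wn 1"
  then show "theta img D \<in> L"
    by (rule in_L)
  show "theta img (wpow 1 D) = wpow n (theta img D)"
    using Wn1_coeff_in_tpa[OF D]
    by (simp add: theta wpow_1 funpow_act1_in_tpa xvar1_eq_xpow1 xpow1_in_tpa lift_facts)
  assume E: "E \<in> Wn 1"
  show "theta img (wbr 1 D E) = wbr n (theta img D) (theta img E)"
    using Wn1_coeff_in_tpa[OF D] Wn1_coeff_in_tpa[OF E]
    by (simp add: theta wbr_1 bracket1_in_tpa lift_facts)
next
  show "inj_on (theta img) (Wn 1)"
    using kn Jn kJ p prime_gt_1_nat img by (blast intro: inj_on_theta_lift)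
qed


section \<open>Images in the derived algebras\<close>

lemma lspan_add_smul:
  assumes "X \<in> lspan A"
  shows "Y \<in> lspan A \<Longrightarrow> wadd (wsmul c X) Y \<in> lspan A"
  using assms
proof (induction arbitrary: c Y)
  case lspan_zero
  have "wadd (wsmul c wzero) Y = Y"
    by (intro ext) (simp add: wadd_def wsmul_def wzero_def padd_def psmul_def pzero_def)
  then show ?case
    using lspan_zero.prems by simp
next
  case (lspan_step D E d)
  have "wadd (wsmul c (wadd (wsmul d D) E)) Y = wadd (wsmul (c * d) D) (wadd (wsmul c E) Y)"
    by (intro ext) (simp add: wadd_def wsmul_def padd_def psmul_def algebra_simps)
  then show ?case
    using lspan_step by (simp add: lspan.lspan_step)
qed

lemma lspan_smul: "X \<in> lspan A \<Longrightarrow> wsmul c X \<in> lspan A"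
proof -
  assume "X \<in> lspan A"
  moreover have "wadd (wsmul c X) wzero = wsmul c X"
    by (intro ext) (simp add: wadd_def wsmul_def wzero_def padd_def psmul_def pzero_def)
  ultimately show ?thesis
    using lspan_add_smul lspan_zero by metis
qed

lemma lspan_base: "X \<in> A \<Longrightarrow> (X::'a::field wder) \<in> lspan A"
proof -
  assume "X \<in> A"
  moreover have "wadd (wsmul 1 X) wzero = X"
    by (intro ext) (simp add: wadd_def wsmul_def wzero_def padd_def psmul_def pzero_def)
  ultimately show ?thesis
    using lspan_step[OF _ lspan_zero, of X A 1] by simp
qed

lemma theta_in_lspan:
  fixes img :: "nat \<Rightarrow> 'a::field wder"
  assumes img: "\<And>i. i < CHAR('a) \<Longrightarrow> img i \<in> lspan A"
  shows "theta img D \<in> lspan A"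
proof -
  let ?partial = "\<lambda>m. (\<lambda>j \<gamma>. \<Sum>i<m. D 0 (\<lambda>k. if k = 0 then i else 0) * img i j \<gamma>)"
  have "?partial m \<in> lspan A" if "m \<le> CHAR('a)" for m
    using that
  proof (induction m)
    case 0
    have "?partial 0 = wzero"
      by (simp add: wzero_def pzero_def)
    then show ?case by (simp add: lspan_zero)
  next
    case (Suc m)
    have "?partial (Suc m) = wadd (wsmul (D 0 (\<lambda>k. if k = 0 then m else 0)) (img m)) (?partial m)"
      by (intro ext) (simp add: wadd_def wsmul_def padd_def psmul_def add.commute)
    then show ?case
      using lspan_add_smul[OF img Suc.IH] Suc.prems by simp
  qed
  then show ?thesis
    unfolding theta_def by simp
qed

lemma of_nat_neq_0_below_CHAR: "0 < i \<Longrightarrow> i < CHAR('a) \<Longrightarrow> (of_nat i :: 'a::semiring_1) \<noteq> 0"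
  by (auto simp: of_nat_eq_0_iff_char_dvd dest: dvd_imp_le)

lemma bracket1_xpow1_1:
  assumes "0 < CHAR('a)"
  shows "bracket1 (xpow1 1) (xpow1 i) = (\<lambda>\<gamma>. (of_nat i - 1) * (xpow1 i \<gamma> :: 'a::field))"
proof -
  have "pd 1 0 (xpow1 1) = (\<lambda>\<gamma>. 1 * (xpow1 0 \<gamma> :: 'a))"
    using pd_xpow1_Suc[of 0] by (simp add: One_nat_def)
  then have "pmul 1 (xpow1 i) (pd 1 0 (xpow1 1)) = (xpow1 i :: 'a tpoly)"
    by (simp add: pmul_smul_right pmul_xpow1[OF assms])
  moreover have "pmul 1 (xpow1 1) (pd 1 0 (xpow1 i)) = (\<lambda>\<gamma>. of_nat i * (xpow1 i \<gamma> :: 'a))"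
  proof (cases i)
    case 0
    then show ?thesis
      using assms by (simp add: pd_xpow1_0 pmul_zero_right)
  next
    case (Suc b)
    then show ?thesis
      unfolding Suc pd_xpow1_Suc pmul_smul_right pmul_xpow1[OF assms] by (simp add: One_nat_def)
  qed
  ultimately show ?thesis
    unfolding bracket1_def by (simp add: algebra_simps)
qed

lemma bracket1_xpow1_0_2:
  assumes "0 < CHAR('a)"
  shows "bracket1 (xpow1 0) (xpow1 2) = (\<lambda>\<gamma>. 2 * (xpow1 1 \<gamma> :: 'a::field))"
proof -
  have "pd 1 0 (xpow1 2) = (\<lambda>\<gamma>. 2 * (xpow1 1 \<gamma> :: 'a))"
    using pd_xpow1_Suc[of 1, where 'a='a] by (simp add: numeral_2_eq_2 One_nat_def)
  then show ?thesis
    using assms by (simp add: bracket1_def pd_xpow1_0 pmul_zero_right pmul_smul_right pmul_xpow1)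
qed

lemma wsmul_inverse: "(c::'a::field) \<noteq> 0 \<Longrightarrow> wsmul (1 / c) (wsmul c X) = X"
  by (intro ext) (simp add: wsmul_def psmul_def)

lemma lift_in_lspan_wbr:
  fixes T :: "'a::field wder set"
  assumes kn: "k < n" and Jn: "J \<subseteq> {..<n}" and kJ: "k \<notin> J" and p2: "2 < CHAR('a)"
    and T: "\<And>i. i < CHAR('a) \<Longrightarrow> lift n k J lam (xpow1 i) \<in> T"
    and i: "i < CHAR('a)"
  shows "lift n k J lam (xpow1 i) \<in> lspan {wbr n D E | D E. D \<in> T \<and> E \<in> T}"
proof -
  have p0: "0 < CHAR('a)" and p1: "1 < CHAR('a)"
    using p2 by auto
  obtain a b and c :: 'a where ab: "a < CHAR('a)" "b < CHAR('a)" and "c \<noteq> 0"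
    and bracket: "bracket1 (xpow1 a) (xpow1 b) = (\<lambda>\<gamma>. c * xpow1 i \<gamma>)"
  proof (cases "i = 1")
    case True
    then show thesis
      using that[of 0 2 2] p2 of_nat_neq_0_below_CHAR[of 2, where 'a='a] bracket1_xpow1_0_2[OF p0]
      by simp
  next
    case False
    have "(of_nat i - 1 :: 'a) \<noteq> 0"
      using of_nat_neq_0_below_CHAR[of "i - 1", where 'a='a] i False by (cases "i = 0") auto
    then show thesis
      using that[of 1 i "of_nat i - 1"] p1 i bracket1_xpow1_1[OF p0] by simp
  qed
  have "wbr n (lift n k J lam (xpow1 a)) (lift n k J lam (xpow1 b)) = wsmul c (lift n k J lam (xpow1 i))"
    unfolding wbr_lift[OF kn Jn kJ p1 xpow1_in_tpa xpow1_in_tpa] bracket lift_smul ..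
  moreover have "wbr n (lift n k J lam (xpow1 a)) (lift n k J lam (xpow1 b))
      \<in> {wbr n D E | D E. D \<in> T \<and> E \<in> T}"
    using T ab by blast
  then have "wsmul (1 / c) (wbr n (lift n k J lam (xpow1 a)) (lift n k J lam (xpow1 b)))
      \<in> lspan {wbr n D E | D E. D \<in> T \<and> E \<in> T}"
    by (rule lspan_smul[OF lspan_base])
  ultimately show ?thesis
    by (simp add: wsmul_inverse[OF \<open>c \<noteq> 0\<close>])
qed


section \<open>The four embeddings as lifts\<close>

lemma imgW_eq_lift:
  assumes "1 \<le> n"
  shows "imgW n i = lift n 0 {} 1 (xpow1 i :: 'a::field tpoly)"
proof -
  have "(\<lambda>k. if k = 0 then i else 0) = (\<lambda>l::nat. if l = 0 then i else if l = 0 then 0 else 0)"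
    by auto
  then have "xmon n (\<lambda>k. if k = 0 then i else 0) = (emb n 0 0 0 (xpow1 i) :: 'a tpoly)"
    using xmon_eq_emb[of 0 n i 0 0] assms by simp
  then show ?thesis
    by (intro ext) (simp add: imgW_def lift_def)
qed

lemma imgS_eq_lift:
  assumes n: "2 \<le> n" and p: "1 < CHAR('a)"
  shows "imgS n i = lift n 0 {1} (-1) (xpow1 i :: 'a::field tpoly)"
proof -
  have n0: "0 < n" and n1: "1 < n"
    using n by auto
  have "xmon n (\<lambda>l. if l = 0 then i else if l = 1 then 1 else 0) = (emb n 0 1 1 (xpow1 i) :: 'a tpoly)"
    by (rule xmon_eq_emb[OF n0])
  moreover have "pd n 1 (emb n 0 1 1 (xpow1 i)) = (emb n 0 0 0 (xpow1 i) :: 'a tpoly)"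
    using pd_emb_linear[of 1 0 n, OF _ n1 p] by (simp add: emb_exponent_0)
  moreover have "pd n 0 (emb n 0 1 1 (xpow1 i)) = (emb n 0 1 1 (pd 1 0 (xpow1 i)) :: 'a tpoly)"
    by (rule pd_emb_base[OF n0])
  ultimately show ?thesis
    by (intro ext) (simp add: imgS_def Dij_def lift_def)
qed

lemma imgH_eq_lift:
  assumes r: "1 \<le> r" and p: "1 < CHAR('a)"
  shows "imgH r i = lift (2*r) 0 {r} (-1) (xpow1 i :: 'a::field tpoly)"
proof -
  have n0: "0 < 2*r" and rn: "r < 2*r" and r0: "r \<noteq> 0"
    using r by auto
  have F: "xmon (2*r) (\<lambda>l. if l = 0 then i else if l = r then 1 else 0) = (emb (2*r) 0 r 1 (xpow1 i) :: 'a tpoly)"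
    by (rule xmon_eq_emb[OF n0])
  have dr: "pd (2*r) r (emb (2*r) 0 r 1 (xpow1 i)) = (emb (2*r) 0 0 0 (xpow1 i) :: 'a tpoly)"
    using pd_emb_linear[OF r0 rn p] by (simp add: emb_exponent_0[OF r0])
  have d0: "pd (2*r) 0 (emb (2*r) 0 r 1 (xpow1 i)) = (emb (2*r) 0 r 1 (pd 1 0 (xpow1 i)) :: 'a tpoly)"
    by (rule pd_emb_base[OF n0])
  show ?thesis
  proof (intro ext)
    fix l \<gamma>
    consider "2*r \<le> l" | "l = 0" | "l = r" | "l < 2*r" "l \<noteq> 0" "l \<noteq> r"
      by linarith
    then show "(imgH r i l \<gamma> :: 'a) = lift (2*r) 0 {r} (-1) (xpow1 i) l \<gamma>"
    proof cases
      case 1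
      then show ?thesis
        using r0 by (simp add: imgH_def DH_def lift_def wsmul_def psmul_def pzero_def)
    next
      case 2
      then show ?thesis
        using r0 n0 unfolding imgH_def F by (simp add: DH_def lift_def wsmul_def psmul_def prm_def sig_def dr)
    next
      case 3
      then show ?thesis
        using r0 rn unfolding imgH_def F by (simp add: DH_def lift_def wsmul_def psmul_def prm_def sig_def d0)
    next
      case 4
      then have "prm r l \<noteq> 0" "prm r l \<noteq> r"
        by (auto simp: prm_def)
      then have "pd (2*r) (prm r l) (emb (2*r) 0 r 1 (xpow1 i)) = (\<lambda>_. 0::'a)"
        by (simp add: pd_emb_other)
      then show ?thesis
        using 4 unfolding imgH_def F by (simp add: DH_def lift_def wsmul_def psmul_def pzero_def)
    qed
  qed
qed

lemma pmul_xvar_emb_base: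
  fixes h :: "'a::field tpoly"
  assumes "j \<noteq> k" "k < n" "0 < CHAR('a)" "h \<in> tpa 1"
  shows "pmul n (xvar n j) (emb n k k 0 h) = emb n k j 1 h"
  using pmul_emb[OF assms(1,2), of 1 "xpow1 0" 0 h] assms
  by (simp add: xvar_eq_emb emb_exponent_0 pmul_xpow1_0_left)

lemma DKc_emb_base:
  assumes "j < 2*r"
  shows "DKc r (emb (2*r+1) (2*r) (2*r) 0 h) j
    = pmul (2*r+1) (xvar (2*r+1) j) (emb (2*r+1) (2*r) (2*r) 0 (pd 1 0 (h::'a::field tpoly)))"
proof -
  have "prm r j < 2*r"
    using assms by (auto simp: prm_def)
  then have "pd (2*r+1) (prm r j) (emb (2*r+1) (2*r) (2*r) 0 h) = (\<lambda>_. 0)"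
    by (intro pd_emb_other) auto
  then show ?thesis
    by (intro ext) (simp add: DKc_def padd_def psmul_def pd_emb_base)
qed

lemma sum_sig_symmetric:
  assumes "\<And>j. j < 2*r \<Longrightarrow> Q (prm r j) = Q j"
  shows "(\<Sum>j<2*r. sig r j * Q j) = (0::'a::field)"
proof -
  have "(\<Sum>j<r + m. g j) = (\<Sum>j<r. g j) + (\<Sum>j<m. g (r + j))" for m and g :: "nat \<Rightarrow> 'a"
    by (induction m) (simp_all add: add.assoc)
  then have "(\<Sum>j<2*r. sig r j * Q j) = (\<Sum>j<r. sig r j * Q j) + (\<Sum>j<r. sig r (r + j) * Q (r + j))"
    unfolding mult_2 .
  also have "\<dots> = (\<Sum>j<r. Q j) + (\<Sum>j<r. - Q j)"
  proof -
    have "Q (r + j) = Q j" if "j < r" for j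
      using assms[of "r + j"] that by (simp add: prm_def)
    then show ?thesis
      by (auto simp: sig_def intro!: sum.cong arg_cong2[where f="(+)"])
  qed
  also have "\<dots> = 0"
    by (simp add: sum_negf)
  finally show ?thesis .
qed

lemma imgK_eq_lift:
  assumes p: "2 < CHAR('a)"
  shows "imgK r i = lift (2*r+1) (2*r) {..<2*r} (1/2) (xpow1 i :: 'a::field tpoly)"
proof -
  let ?n = "2*r+1" and ?t = "2*r"
  let ?F = "emb ?n ?t ?t 0 (xpow1 i) :: 'a tpoly" and ?P = "emb ?n ?t ?t 0 (pd 1 0 (xpow1 i)) :: 'a tpoly"
  have "(\<lambda>l::nat. if l = ?t then i else 0) = (\<lambda>l. if l = ?t then i else if l = ?t then 0 else 0)"
    by auto
  then have F: "xmon ?n (\<lambda>l. if l = ?t then i else 0) = ?F"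
    using xmon_eq_emb[of ?t ?n i ?t 0] by simp
  have DKc: "DKc r ?F j = emb ?n ?t j 1 (pd 1 0 (xpow1 i))" if "j < ?t" for j
    using that p by (simp add: DKc_emb_base pmul_xvar_emb_base pd_in_tpa)
  have "(\<Sum>j<?t. sig r j * pmul ?n (xvar ?n j) (DKc r ?F (prm r j)) \<gamma>) = 0" for \<gamma>
  proof (rule sum_sig_symmetric)
    fix j
    assume j: "j < ?t"
    then have "prm r j < ?t" "prm r (prm r j) = j"
      by (auto simp: prm_def)
    then show "pmul ?n (xvar ?n (prm r j)) (DKc r ?F (prm r (prm r j))) \<gamma>
        = pmul ?n (xvar ?n j) (DKc r ?F (prm r j)) \<gamma>"
      using j by (simp add: DKc_emb_base pmul_left_commute)
  qed
  moreover have "(2::'a) \<noteq> 0"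
    using of_nat_neq_0_below_CHAR[of 2, where 'a='a] p by simp
  ultimately show ?thesis
    by (intro ext) (auto simp: imgK_def DK_def lift_def wsmul_def psmul_def pzero_def F DKc)
qed

lemma lift_in_Stilde:
  assumes kn: "k < n" and jn: "j < n" and jk: "j \<noteq> k" and p: "1 < CHAR('a)"
  shows "lift n k {j} (-1) (f::'a::field tpoly) \<in> Stilde n"
proof -
  have "(\<Sum>i<n. pd n i (lift n k {j} (-1) f i) \<gamma>) = 0" for \<gamma>
  proof -
    have "(\<Sum>i<n. pd n i (lift n k {j} (-1) f i) \<gamma>) = (\<Sum>i\<in>{k, j}. pd n i (lift n k {j} (-1) f i) \<gamma>)"
      by (rule sum.mono_neutral_right) (use kn jn in \<open>auto simp: lift_def pzero_def pd_zero\<close>)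
    also have "\<dots> = emb n k k 0 (pd 1 0 f) \<gamma> - emb n k k 0 (pd 1 0 f) \<gamma>"
      using pd_emb_linear[OF jk jn p, of "pd 1 0 f"] jk
      by (simp add: lift_def psmul_def pd_uminus pd_emb_base[OF kn] emb_exponent_0)
    finally show ?thesis by simp
  qed
  moreover have "lift n k {j} (-1) f \<in> Wn n"
    by (rule lift_in_Wn) (use kn jn jk p in auto)
  ultimately show ?thesis
    by (simp add: Stilde_def)
qed


section \<open>The embeddings are injective restricted homomorphisms\<close>

lemma half_eq_of_nat:
  assumes p: "prime CHAR('a::field)" and p2: "2 < CHAR('a)"
  shows "(1/2::'a) = of_nat ((CHAR('a) + 1) div 2)"
proof -
  have "2 * ((CHAR('a) + 1) div 2) = CHAR('a) + 1"
    using prime_odd_nat[OF p p2] by presburger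
  then have "(2::'a) * of_nat ((CHAR('a) + 1) div 2) = 1"
    by (metis add_0 of_nat_1 of_nat_CHAR of_nat_add of_nat_mult of_nat_numeral)
  moreover have "(2::'a) \<noteq> 0"
    using of_nat_neq_0_below_CHAR[of 2, where 'a='a] p2 by simp
  ultimately show ?thesis
    by (simp add: field_simps)
qed

lemma inj_rhom_W:
  assumes p: "prime CHAR('a::field)" and n: "1 \<le> n"
  shows "inj_rhom n (Wn n) (theta (imgW n :: nat \<Rightarrow> 'a wder))"
proof (rule inj_rhom_theta_lift[where k=0 and J="{}" and lam=1 and m=1])
  fix D :: "'a wder"
  assume "D \<in> Wn 1"
  then have "theta (imgW n) D = lift n 0 {} 1 (D 0)"
    by (intro theta_eq_lift) (simp_all add: imgW_eq_lift[OF n] Wn1_coeff_in_tpa)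
  also have "\<dots> \<in> Wn n"
    by (rule lift_in_Wn) (use n p prime_gt_1_nat in auto)
  finally show "theta (imgW n) D \<in> Wn n" .
qed (use p n in \<open>simp_all add: imgW_eq_lift\<close>)

lemma inj_rhom_S:
  assumes p: "prime CHAR('a::field)" and p2: "2 < CHAR('a)" and n: "2 \<le> n"
  shows "inj_rhom n (Sn n) (theta (imgS n :: nat \<Rightarrow> 'a wder))"
proof -
  have p1: "1 < CHAR('a)"
    using p2 by simp
  show ?thesis
  proof (rule inj_rhom_theta_lift[where k=0 and J="{1}" and lam="-1" and m="CHAR('a) - 1"])
    fix D :: "'a wder"
    show "theta (imgS n) D \<in> Sn n"
      unfolding Sn_def
    proof (rule theta_in_lspan)
      fix i
      assume "i < CHAR('a)"
      then show "(imgS n i :: 'a wder) \<in> lspan {wbr n D E | D E. D \<in> Stilde n \<and> E \<in> Stilde n}"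
        unfolding imgS_eq_lift[OF n p1] using n p2 by (intro lift_in_lspan_wbr lift_in_Stilde) auto
    qed
  qed (use p p1 n in \<open>simp_all add: imgS_eq_lift\<close>)
qed

lemma inj_rhom_H:
  assumes p: "prime CHAR('a::field)" and p2: "2 < CHAR('a)" and r: "1 \<le> r"
  shows "inj_rhom (2*r) (Hn r) (theta (imgH r :: nat \<Rightarrow> 'a wder))"
proof -
  have p1: "1 < CHAR('a)"
    using p2 by simp
  show ?thesis
  proof (rule inj_rhom_theta_lift[where k=0 and J="{r}" and lam="-1" and m="CHAR('a) - 1"])
    fix D :: "'a wder"
    show "theta (imgH r) D \<in> Hn r"
      unfolding Hn_def
    proof (rule theta_in_lspan)
      fix i
      assume "i < CHAR('a)"
      let ?\<alpha> = "\<lambda>l. if l = 0 then i else if l = r then 1 else (0::nat)"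
      have "?\<alpha> \<in> idx CHAR('a) (2*r)"
        using \<open>i < CHAR('a)\<close> p2 r by (auto simp: idx_def)
      moreover have "?\<alpha> r = 1"
        using r by simp
      then have "?\<alpha> \<noteq> (\<lambda>_. 0)" "?\<alpha> \<noteq> (\<lambda>l. if l < 2*r then CHAR('a) - 1 else 0)"
        using p2 r by (auto dest: fun_cong[where x=r])
      ultimately show "(imgH r i :: 'a wder) \<in> lspan {DH r (xmon (2*r) \<alpha>) | \<alpha>.
          \<alpha> \<in> idx CHAR('a) (2*r) \<and> \<alpha> \<noteq> (\<lambda>_. 0) \<and> \<alpha> \<noteq> (\<lambda>l. if l < 2*r then CHAR('a) - 1 else 0)}"
        unfolding imgH_def by (blast intro: lspan_smul lspan_base)
    qed
  qed (use p p1 r in \<open>simp_all add: imgH_eq_lift\<close>)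
qed

lemma inj_rhom_K:
  assumes p: "prime CHAR('a::field)" and p2: "2 < CHAR('a)"
  shows "inj_rhom (2*r+1) (Kn r) (theta (imgK r :: nat \<Rightarrow> 'a wder))"
proof (rule inj_rhom_theta_lift[where k="2*r" and J="{..<2*r}" and lam="1/2" and m="(CHAR('a) + 1) div 2"])
  fix D :: "'a wder"
  have "(lift (2*r+1) (2*r) {..<2*r} (1/2) (xpow1 i) :: 'a wder) \<in> Ktilde r" if "i < CHAR('a)" for i
  proof -
    have "(\<lambda>l. if l = 2*r then i else 0) \<in> idx CHAR('a) (2*r+1)"
      using that by (auto simp: idx_def)
    then have "(imgK r i :: 'a wder) \<in> Ktilde r"
      unfolding imgK_def Ktilde_def by (blast intro: lspan_smul lspan_base)
    then show ?thesis
      using p2 by (simp add: imgK_eq_lift)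
  qed
  then show "theta (imgK r) D \<in> Kn r"
    unfolding Kn_def using p2 by (intro theta_in_lspan) (simp add: imgK_eq_lift lift_in_lspan_wbr)
qed (use p p2 in \<open>simp_all add: imgK_eq_lift half_eq_of_nat\<close>)

theorem lemma2p1:
  assumes "CHAR('a::alg_closed_field) > 2"
  shows "(\<forall>n\<ge>1. inj_rhom n (Wn n) (theta (imgW n :: nat \<Rightarrow> 'a wder)))
       \<and> (\<forall>n\<ge>2. inj_rhom n (Sn n) (theta (imgS n :: nat \<Rightarrow> 'a wder)))
       \<and> (\<forall>r\<ge>1. inj_rhom (2*r) (Hn r) (theta (imgH r :: nat \<Rightarrow> 'a wder)))
       \<and> (\<forall>r\<ge>1. inj_rhom (2*r+1) (Kn r) (theta (imgK r :: nat \<Rightarrow> 'a wder)))"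
proof -
  have "prime CHAR('a)"
    using assms by (intro prime_CHAR_semidom) simp
  then show ?thesis
    using assms by (simp add: inj_rhom_W inj_rhom_S inj_rhom_H inj_rhom_K)
qed

end
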